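(* Let $M,N$ be indecomposable non-projective $A_n^\ell$-modules. If $\underline{\mathrm{Hom}}(M,N)=0$ and $\underline{\mathrm{Hom}}(N,M)=0$, then $\mathrm{top}(M)\not\cong\mathrm{top}(N)$ and $\mathrm{soc}(M)\not\cong\mathrm{soc}(N)$.
   Context: $A_n^\ell=kQ/I$ ($k$ algebraically closed), $Q$ the cyclic quiver with vertices $1,\dots,n$ and arrows $i\to i+1$, $n\to 1$, $I$ generated by all paths of length $\ell+1$. $\underline{\mathrm{Hom}}$ denotes Hom modulo morphisms factoring through projective modules. *)

theory Defs
  imports "Jordan_Normal_Form.DL_Rank" "HOL-Computational_Algebra.Polynomial"
begin

text \<open>Finite-dimensional modules over A_n^l = kQ/I are represented as
  representations of the cyclic quiver with vertices 0..n-1 (arrows i -> (i+1) mod n)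
  bound by the relations: every path of length l+1 acts as zero.
  A representation is a pair (d, A): d i = dimension of the vector space k^(d i) at vertex i,
  A i = matrix of the arrow i -> (i+1) mod n, of size d((i+1) mod n) x d i.\<close>

type_synonym 'k rep = "(nat \<Rightarrow> nat) \<times> (nat \<Rightarrow> 'k mat)"

abbreviation dimv :: "'k rep \<Rightarrow> nat \<Rightarrow> nat" where "dimv M \<equiv> fst M"
abbreviation arr :: "'k rep \<Rightarrow> nat \<Rightarrow> 'k mat" where "arr M \<equiv> snd M"

definition nxt :: "nat \<Rightarrow> nat \<Rightarrow> nat" where "nxt n i = Suc i mod n"
definition prv :: "nat \<Rightarrow> nat \<Rightarrow> nat" where "prv n i = (i + n - 1) mod n"

fun pathmat :: "nat \<Rightarrow> 'k::field rep \<Rightarrow> nat \<Rightarrow> nat \<Rightarrow> 'k mat" where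
  "pathmat n M i 0 = 1\<^sub>m (dimv M i)"
| "pathmat n M i (Suc m) = arr M ((i + m) mod n) * pathmat n M i m"

definition is_rep :: "nat \<Rightarrow> nat \<Rightarrow> 'k::field rep \<Rightarrow> bool" where
  "is_rep n l M \<longleftrightarrow>
     (\<forall>i<n. arr M i \<in> carrier_mat (dimv M (nxt n i)) (dimv M i)) \<and>
     (\<forall>i<n. pathmat n M i (Suc l) = 0\<^sub>m (dimv M ((i + Suc l) mod n)) (dimv M i))"

definition is_hom :: "nat \<Rightarrow> 'k::field rep \<Rightarrow> 'k rep \<Rightarrow> (nat \<Rightarrow> 'k mat) \<Rightarrow> bool" where
  "is_hom n M N f \<longleftrightarrow>
     (\<forall>i<n. f i \<in> carrier_mat (dimv N i) (dimv M i)) \<and>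
     (\<forall>i<n. arr N i * f i = f (nxt n i) * arr M i)"

definition is_surj_hom :: "nat \<Rightarrow> 'k::field rep \<Rightarrow> 'k rep \<Rightarrow> (nat \<Rightarrow> 'k mat) \<Rightarrow> bool" where
  "is_surj_hom n M N f \<longleftrightarrow> is_hom n M N f \<and>
     (\<forall>i<n. \<forall>v \<in> carrier_vec (dimv N i). \<exists>w \<in> carrier_vec (dimv M i). f i *\<^sub>v w = v)"

definition is_projective :: "nat \<Rightarrow> nat \<Rightarrow> 'k::field rep \<Rightarrow> bool" where
  "is_projective n l P \<longleftrightarrow> is_rep n l P \<and>
     (\<forall>X Y g h. is_rep n l X \<and> is_rep n l Y \<and> is_surj_hom n X Y g \<and> is_hom n P Y h \<longrightarrow>
        (\<exists>h'. is_hom n P X h' \<and> (\<forall>i<n. g i * h' i = h i)))"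

definition factors_through_projective :: "nat \<Rightarrow> nat \<Rightarrow> 'k::field rep \<Rightarrow> 'k rep \<Rightarrow> (nat \<Rightarrow> 'k mat) \<Rightarrow> bool" where
  "factors_through_projective n l M N f \<longleftrightarrow>
     (\<exists>P a b. is_projective n l P \<and> is_hom n M P a \<and> is_hom n P N b \<and> (\<forall>i<n. f i = b i * a i))"

definition stable_hom_zero :: "nat \<Rightarrow> nat \<Rightarrow> 'k::field rep \<Rightarrow> 'k rep \<Rightarrow> bool" where
  "stable_hom_zero n l M N \<longleftrightarrow> (\<forall>f. is_hom n M N f \<longrightarrow> factors_through_projective n l M N f)"

definition rep_iso :: "nat \<Rightarrow> 'k::field rep \<Rightarrow> 'k rep \<Rightarrow> bool" where
  "rep_iso n M N \<longleftrightarrow> (\<exists>f g. is_hom n M N f \<and> is_hom n N M g \<and>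
     (\<forall>i<n. g i * f i = 1\<^sub>m (dimv M i) \<and> f i * g i = 1\<^sub>m (dimv N i)))"

definition dsum :: "nat \<Rightarrow> 'k::field rep \<Rightarrow> 'k rep \<Rightarrow> 'k rep" where
  "dsum n X Y = (\<lambda>i. dimv X i + dimv Y i,
     \<lambda>i. four_block_mat (arr X i) (0\<^sub>m (dimv X (nxt n i)) (dimv Y i))
                         (0\<^sub>m (dimv Y (nxt n i)) (dimv X i)) (arr Y i))"

definition nonzero_rep :: "nat \<Rightarrow> 'k rep \<Rightarrow> bool" where
  "nonzero_rep n M \<longleftrightarrow> (\<exists>i<n. 0 < dimv M i)"

definition indecomposable :: "nat \<Rightarrow> nat \<Rightarrow> 'k::field rep \<Rightarrow> bool" where
  "indecomposable n l M \<longleftrightarrow> is_rep n l M \<and> nonzero_rep n M \<and>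
     \<not> (\<exists>X Y. is_rep n l X \<and> is_rep n l Y \<and> nonzero_rep n X \<and> nonzero_rep n Y \<and>
            rep_iso n M (dsum n X Y))"

text \<open>top(M) = M / rad M, where (rad M)_i is the image of the arrow ending at i;
  it is semisimple: all arrows act by zero.\<close>
definition top_rep :: "nat \<Rightarrow> 'k::field rep \<Rightarrow> 'k rep" where
  "top_rep n M = (let t = (\<lambda>i. dimv M i - vec_space.rank (dimv M i) (arr M (prv n i)))
                  in (t, \<lambda>i. 0\<^sub>m (t (nxt n i)) (t i)))"

text \<open>soc(M): at vertex i, the kernel of the (unique) arrow starting at i;
  semisimple: all arrows act by zero.\<close>
definition soc_rep :: "nat \<Rightarrow> 'k::field rep \<Rightarrow> 'k rep" where
  "soc_rep n M = (let s = (\<lambda>i. dimv M i - vec_space.rank (dimv M (nxt n i)) (arr M i))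
                  in (s, \<lambda>i. 0\<^sub>m (s (nxt n i)) (s i)))"

end

(* An indecomposable A_n^l-module M is a string module: pick a nonzero path p of maximal length t,
   starting at a vertex i, and x in M_i with p x <> 0.  The images of x under the paths of length
   at most t form a basis of a submodule isomorphic to the uniserial module of length t + 1 with
   top at i, and a functional that is 1 on p x and vanishes on the images of x under the shorter
   paths ending at the same vertex yields a retraction onto it; by indecomposability M is this
   string module.  Its top is simple at i, its socle is simple at i + t, and it is projective
   exactly when t = l.
   Now let M and N be non-projective string modules of lengths a + 1 <= b + 1.  If they have the
   same top, the quotient map N -> M sending generator to generator does not factor through a
   projective: it would lift to the projective cover of M, a string module of length l + 1, in
   which no vector killed by the paths of length b + 1 maps onto the generator of M.  If they have
   the same socle, the inclusion M -> N fails to factor for the same reason. *)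

theory Submission
  imports Defs
begin

lemma zero_mat_mult_vec[simp]: "v \<in> carrier_vec b \<Longrightarrow> 0\<^sub>m a b *\<^sub>v v = 0\<^sub>v a"
  by (intro eq_vecI) (auto simp: mult_mat_vec_def)

lemma mat_mult_zero_vec[simp]: "A \<in> carrier_mat a b \<Longrightarrow> A *\<^sub>v 0\<^sub>v b = 0\<^sub>v a"
  by (intro eq_vecI) (auto simp: mult_mat_vec_def intro!: scalar_prod_right_zero)

lemma mult_mat_vec_unit:
  fixes A :: "'a::field mat"
  assumes "A \<in> carrier_mat p s" "k < s"
  shows "A *\<^sub>v unit_vec s k = col A k"
proof (rule eq_vecI)
  fix r assume r: "r < dim_vec (col A k)"
  have "row A r \<in> carrier_vec s" using assms by auto
  then have "row A r \<bullet> unit_vec s k = row A r $ k" using assms by (simp add: scalar_prod_right_unit)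
  then show "(A *\<^sub>v unit_vec s k) $ r = col A k $ r" using r assms by simp
qed (use assms in auto)

lemma nonzero_mat_vec:
  fixes A :: "'a::field mat"
  assumes "A \<in> carrier_mat a b" "A \<noteq> 0\<^sub>m a b"
  shows "\<exists>y \<in> carrier_vec b. A *\<^sub>v y \<noteq> 0\<^sub>v a"
proof (rule ccontr)
  assume "\<not> ?thesis"
  then have "c < b \<Longrightarrow> col A c = 0\<^sub>v a" for c
    using assms(1) mult_mat_vec_unit[OF assms(1)] unit_vec_carrier by metis
  have "A = 0\<^sub>m a b"
  proof (rule eq_matI)
    fix r c assume rc: "r < dim_row (0\<^sub>m a b)" "c < dim_col (0\<^sub>m a b)"
    then have "A $$ (r, c) = col A c $ r" using assms(1) by simp
    then show "A $$ (r, c) = 0\<^sub>m a b $$ (r, c)" using \<open>c < b \<Longrightarrow> col A c = 0\<^sub>v a\<close> rc by simp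
  qed (use assms in auto)
  then show False using assms(2) by simp
qed

lemma vec_eq_of_minus_eq_zero:
  fixes v :: "'a::field vec"
  assumes "v \<in> carrier_vec m" "w \<in> carrier_vec m" "v - w = 0\<^sub>v m"
  shows "v = w"
proof (rule eq_vecI)
  fix r assume "r < dim_vec w"
  then have "(v - w) $ r = 0" using assms by simp
  then show "v $ r = w $ r" using \<open>r < dim_vec w\<close> assms(2) by simp
qed (use assms in auto)

lemma inj_mat_mult_left_cancel:
  fixes V :: "'a::field mat"
  assumes V: "V \<in> carrier_mat d s" and inj: "\<And>y. y \<in> carrier_vec s \<Longrightarrow> V *\<^sub>v y = 0\<^sub>v d \<Longrightarrow> y = 0\<^sub>v s"
    and X: "X \<in> carrier_mat s c" and Y: "Y \<in> carrier_mat s c" and eq: "V * X = V * Y"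
  shows "X = Y"
proof (rule eq_matI)
  fix r k assume rk: "r < dim_row Y" "k < dim_col Y"
  have cX: "col X k \<in> carrier_vec s" and cY: "col Y k \<in> carrier_vec s" using X Y by auto
  have "V *\<^sub>v (col X k - col Y k) = V *\<^sub>v col X k - V *\<^sub>v col Y k"
    by (rule mult_minus_distrib_mat_vec[OF V cX cY])
  also have "\<dots> = col (V * X) k - col (V * Y) k"
    using col_mult2[OF V X] col_mult2[OF V Y] rk Y by simp
  also have "\<dots> = 0\<^sub>v d" using eq V Y by (simp add: carrier_vecI)
  finally have "col X k = col Y k"
    using inj cX cY vec_eq_of_minus_eq_zero by (metis minus_carrier_vec)
  then show "X $$ (r, k) = Y $$ (r, k)" using X Y rk by (metis carrier_matD col_def index_vec)
qed (use X Y in auto)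

lemma exists_mat_mult_eq:
  fixes V :: "'a::field mat"
  assumes V: "V \<in> carrier_mat n s" and K: "K \<in> carrier_mat n d"
    and cols: "\<And>c. c < d \<Longrightarrow> \<exists>z \<in> carrier_vec s. V *\<^sub>v z = col K c"
  obtains Z where "Z \<in> carrier_mat s d" "V * Z = K"
proof -
  define z where "z = (\<lambda>c. SOME z. z \<in> carrier_vec s \<and> V *\<^sub>v z = col K c)"
  have z: "z c \<in> carrier_vec s \<and> V *\<^sub>v z c = col K c" if "c < d" for c
    unfolding z_def by (rule someI_ex) (use cols[OF that] in blast)
  define Z where "Z = mat s d (\<lambda>(r, c). z c $ r)"
  have colZ: "col Z c = z c" if "c < d" for c
    unfolding Z_def using that z[OF that] by (auto intro!: eq_vecI)
  have "V * Z = K"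
  proof (rule eq_matI)
    fix r c assume rc: "r < dim_row K" "c < dim_col K"
    have "(V * Z) $$ (r, c) = (V *\<^sub>v col Z c) $ r" using V K rc by (simp add: Z_def)
    then show "(V * Z) $$ (r, c) = K $$ (r, c)" using z colZ K rc by simp
  qed (use V K in \<open>auto simp: Z_def\<close>)
  then show thesis using that[of Z] by (simp add: Z_def)
qed

lemma (in vec_space) maximal_indpt_cols_exists:
  fixes A :: "'a mat"
  obtains S where "maximal S (\<lambda>T. T \<subseteq> set (cols A) \<and> lin_indpt T)"
  using maximal_exists[of "\<lambda>T. T \<subseteq> set (cols A) \<and> lin_indpt T" "card (set (cols A))" "{}"]
  by (meson List.finite_set card_mono empty_iff empty_subsetI finite_lin_indpt2 rev_finite_subset)

lemma (in vec_space) span_cols_eq_image: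
  assumes A: "A \<in> carrier_mat n nc"
  shows "span (set (cols A)) = (\<lambda>w. A *\<^sub>v w) ` carrier_vec nc"
proof -
  have cs: "set (cols A) \<subseteq> carrier_vec n" using A cols_dim by blast
  have cd: "\<forall>v\<in>set (cols A). dim_vec v = n" using A by (auto simp: cols_def)
  have lc: "lincomb_list f (cols A) = A *\<^sub>v vec (length (cols A)) f" for f
    using lincomb_list_as_mat_mult[OF cd, of f] mat_of_cols_cols[of A] A by simp
  show ?thesis
  proof (intro equalityI subsetI)
    fix v assume "v \<in> span (set (cols A))"
    then obtain f where "v = lincomb_list f (cols A)"
      using span_list_as_span[OF cs] unfolding span_list_def by auto
    then show "v \<in> (\<lambda>w. A *\<^sub>v w) ` carrier_vec nc" unfolding lc using A by auto
  next
    fix v assume "v \<in> (\<lambda>w. A *\<^sub>v w) ` carrier_vec nc"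
    then obtain w where w: "w \<in> carrier_vec nc" "v = A *\<^sub>v w" by blast
    have "vec (length (cols A)) (\<lambda>k. w $ k) = w" using A w by (intro eq_vecI) auto
    then have "v = lincomb_list (\<lambda>k. w $ k) (cols A)" unfolding lc w(2) by simp
    then have "v \<in> span_list (cols A)" unfolding span_list_def by auto
    then show "v \<in> span (set (cols A))" using span_list_as_span[OF cs] by simp
  qed
qed

lemma (in vec_space) rank_le_nrows:
  assumes A: "A \<in> carrier_mat n nc"
  shows "rank A \<le> n"
proof -
  obtain S where S: "maximal S (\<lambda>T. T \<subseteq> set (cols A) \<and> lin_indpt T)" by (rule maximal_indpt_cols_exists)
  then have "S \<subseteq> set (cols A)" "lin_indpt S" unfolding maximal_def by auto
  moreover have "set (cols A) \<subseteq> carrier_vec n" using A cols_dim by blast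
  ultimately have "card S \<le> dim" by (intro li_le_dim(2)) auto
  then show ?thesis using rank_card_indpt[OF A S] dim_is_n by simp
qed

lemma (in vec_space) rank_eq_nrows_iff_surj:
  assumes A: "A \<in> carrier_mat n nc"
  shows "rank A = n \<longleftrightarrow> (\<forall>v \<in> carrier_vec n. \<exists>w \<in> carrier_vec nc. A *\<^sub>v w = v)"
proof
  assume surj: "\<forall>v \<in> carrier_vec n. \<exists>w \<in> carrier_vec nc. A *\<^sub>v w = v"
  have "(\<lambda>w. A *\<^sub>v w) ` carrier_vec nc = carrier_vec n"
    using surj A by (auto intro: mult_mat_vec_carrier)
  then have "span_vs (set (cols A)) = V" unfolding span_cols_eq_image[OF A] by simp
  then show "rank A = n" unfolding rank_def using dim_is_n by simp
next
  assume r: "rank A = n"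
  obtain S where S: "maximal S (\<lambda>T. T \<subseteq> set (cols A) \<and> lin_indpt T)" by (rule maximal_indpt_cols_exists)
  then have Ss: "S \<subseteq> set (cols A)" "lin_indpt S" unfolding maximal_def by auto
  have "S \<subseteq> carrier_vec n" using Ss(1) A cols_dim by blast
  moreover have "finite S" using Ss(1) finite_subset by blast
  moreover have "card S = dim" using r rank_card_indpt[OF A S] dim_is_n by simp
  ultimately have "basis S" using Ss(2) by (intro dim_li_is_basis) auto
  then have "carrier_vec n \<subseteq> span (set (cols A))"
    unfolding basis_def using span_is_monotone[OF Ss(1)] by simp
  then show "\<forall>v \<in> carrier_vec n. \<exists>w \<in> carrier_vec nc. A *\<^sub>v w = v"
    unfolding span_cols_eq_image[OF A] by blast
qed

lemma distinct_cols_of_inj: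
  fixes A :: "'a::field mat"
  assumes A: "A \<in> carrier_mat nr nc" and inj: "\<forall>v \<in> carrier_vec nc. A *\<^sub>v v = 0\<^sub>v nr \<longrightarrow> v = 0\<^sub>v nc"
  shows "distinct (cols A)"
proof (rule ccontr)
  assume "\<not> distinct (cols A)"
  then obtain p q where pq: "p \<noteq> q" "p < nc" "q < nc" "col A p = col A q"
    using A distinct_conv_nth[of "cols A"] by auto
  define v where "v = (unit_vec nc p - unit_vec nc q :: 'a vec)"
  have "A *\<^sub>v v = col A p - col A q"
    unfolding v_def using A pq by (simp add: mult_minus_distrib_mat_vec mult_mat_vec_unit)
  also have "\<dots> = 0\<^sub>v nr" using A pq(4) by (simp add: carrier_vecI)
  finally have "v = 0\<^sub>v nc" using inj unfolding v_def by simp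
  then have "v $ p = 0" using pq by simp
  moreover have "v $ p = 1" unfolding v_def using pq by simp
  ultimately show False by simp
qed

lemma (in vec_space) rank_eq_ncols_iff_inj:
  assumes A: "A \<in> carrier_mat n nc"
  shows "rank A = nc \<longleftrightarrow> (\<forall>v \<in> carrier_vec nc. A *\<^sub>v v = 0\<^sub>v n \<longrightarrow> v = 0\<^sub>v nc)"
proof
  assume rk: "rank A = nc"
  have dist: "distinct (cols A)"
  proof (rule ccontr)
    assume nd: "\<not> distinct (cols A)"
    obtain S where S: "maximal S (\<lambda>T. T \<subseteq> set (cols A) \<and> lin_indpt T)" by (rule maximal_indpt_cols_exists)
    have "card S \<le> card (set (cols A))" using S unfolding maximal_def by (simp add: card_mono)
    also have "\<dots> < length (cols A)" using nd card_distinct card_length le_neq_implies_less by blast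
    finally show False using rank_card_indpt[OF A S] rk A by simp
  qed
  show "\<forall>v \<in> carrier_vec nc. A *\<^sub>v v = 0\<^sub>v n \<longrightarrow> v = 0\<^sub>v nc"
    using lin_depI[OF A _ _ _ dist] full_rank_lin_indpt[OF A rk dist] by blast
next
  assume inj: "\<forall>v \<in> carrier_vec nc. A *\<^sub>v v = 0\<^sub>v n \<longrightarrow> v = 0\<^sub>v nc"
  have dist: "distinct (cols A)" by (rule distinct_cols_of_inj[OF A inj])
  have "lin_indpt (set (cols A))"
    using lin_depE[OF A _ dist] inj by metis
  then show "rank A = nc" using lin_indpt_full_rank[OF A dist] by simp
qed

lemma invertible_mat_dims_eq:
  fixes A :: "'a::field mat"
  assumes A: "A \<in> carrier_mat p q" and B: "B \<in> carrier_mat q p"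
    and BA: "B * A = 1\<^sub>m q" and AB: "A * B = 1\<^sub>m p"
  shows "p = q"
proof -
  have inj: "\<forall>v \<in> carrier_vec c. X *\<^sub>v v = 0\<^sub>v r \<longrightarrow> v = 0\<^sub>v c"
    if X: "X \<in> carrier_mat r c" and Y: "Y \<in> carrier_mat c r" and YX: "Y * X = 1\<^sub>m c" for X Y :: "'a mat" and r c
  proof (intro ballI impI)
    fix v assume v: "v \<in> carrier_vec c" "X *\<^sub>v v = 0\<^sub>v r"
    have "v = (Y * X) *\<^sub>v v" using YX v by simp
    also have "\<dots> = Y *\<^sub>v (X *\<^sub>v v)" using X Y v by (simp add: assoc_mult_mat_vec)
    finally show "v = 0\<^sub>v c" using v Y by simp
  qed
  have "q \<le> p" using vec_space.rank_eq_ncols_iff_inj[OF A] inj[OF A B BA] vec_space.rank_le_nrows[OF A] by simp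
  moreover have "p \<le> q" using vec_space.rank_eq_ncols_iff_inj[OF B] inj[OF B A AB] vec_space.rank_le_nrows[OF B] by simp
  ultimately show ?thesis by simp
qed

section \<open>Splitting an idempotent and complementing a split monomorphism\<close>

lemma (in vec_space) col_space_basis:
  fixes K :: "'a mat"
  assumes K: "K \<in> carrier_mat n d"
  obtains s V where "V \<in> carrier_mat n s" "set (cols V) \<subseteq> set (cols K)"
    "\<forall>y \<in> carrier_vec s. V *\<^sub>v y = 0\<^sub>v n \<longrightarrow> y = 0\<^sub>v s"
    "\<forall>c < d. \<exists>z \<in> carrier_vec s. V *\<^sub>v z = col K c"
proof -
  obtain S where S: "maximal S (\<lambda>T. T \<subseteq> set (cols K) \<and> lin_indpt T)" by (rule maximal_indpt_cols_exists)
  then have Ssub: "S \<subseteq> set (cols K)" and Sindpt: "lin_indpt S" unfolding maximal_def by auto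
  have cK: "set (cols K) \<subseteq> carrier_vec n" using K cols_dim by blast
  have "finite S" using Ssub by (rule finite_subset) simp
  then obtain vs where vs: "set vs = S" "distinct vs" using finite_distinct_list by blast
  define V where "V = mat_of_cols n vs"
  have V: "V \<in> carrier_mat n (length vs)" unfolding V_def by simp
  have "set vs \<subseteq> carrier_vec n" using vs Ssub cK by blast
  then have colsV: "cols V = vs" unfolding V_def by (simp add: cols_mat_of_cols)
  have inj: "y = 0\<^sub>v (length vs)" if y: "y \<in> carrier_vec (length vs)" "V *\<^sub>v y = 0\<^sub>v n" for y
  proof (rule ccontr)
    assume "y \<noteq> 0\<^sub>v (length vs)"
    then have "lin_dep (set (cols V))" using lin_depI[OF V y(1) _ y(2)] colsV vs by auto
    then show False using Sindpt colsV vs by simp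
  qed
  have inspan: "w \<in> span S" if w: "w \<in> set (cols K)" for w
  proof (cases "w \<in> S")
    case True then show ?thesis using in_own_span Ssub cK by blast
  next
    case False
    then have "\<not> lin_indpt (insert w S)" using S w Ssub unfolding maximal_def by blast
    then show ?thesis using lin_dep_iff_in_span[of S w] Ssub Sindpt cK w False by auto
  qed
  have "\<exists>z \<in> carrier_vec (length vs). V *\<^sub>v z = col K c" if c: "c < d" for c
  proof -
    have "col K c \<in> span (set (cols V))" using inspan K c colsV vs by (simp add: cols_def)
    then show ?thesis unfolding span_cols_eq_image[OF V] by (metis imageE)
  qed
  then show thesis using that[OF V] inj colsV vs Ssub by auto
qed

lemma (in vec_space) idempotent_factorization:
  fixes K :: "'a mat"
  assumes K: "K \<in> carrier_mat n n" and idem: "K * K = K"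
  obtains s V Z where "V \<in> carrier_mat n s" "Z \<in> carrier_mat s n" "V * Z = K" "Z * V = 1\<^sub>m s"
proof -
  obtain s V where V: "V \<in> carrier_mat n s" and colsV: "set (cols V) \<subseteq> set (cols K)"
    and inj: "\<forall>y \<in> carrier_vec s. V *\<^sub>v y = 0\<^sub>v n \<longrightarrow> y = 0\<^sub>v s"
    and span: "\<forall>c < n. \<exists>z \<in> carrier_vec s. V *\<^sub>v z = col K c"
    by (rule col_space_basis[OF K])
  obtain Z where Z: "Z \<in> carrier_mat s n" and VZ: "V * Z = K"
    using exists_mat_mult_eq[OF V K span[rule_format]] by blast
  have KV: "K * V = V"
  proof (rule eq_matI)
    fix r k assume rk: "r < dim_row V" "k < dim_col V"
    have "col V k \<in> set (cols K)" using colsV rk by (metis cols_length cols_nth nth_mem subsetD)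
    then obtain m where m: "m < n" "col V k = col K m"
      using K by (metis cols_length cols_nth in_set_conv_nth carrier_matD(2))
    have "(K * V) $$ (r, k) = (K *\<^sub>v col V k) $ r" using K V rk by simp
    also have "K *\<^sub>v col V k = col (K * K) m" unfolding m(2) by (rule col_mult2[symmetric, OF K K m(1)])
    also have "\<dots> = col V k" using idem m by simp
    finally show "(K * V) $$ (r, k) = V $$ (r, k)" using rk by simp
  qed (use V K in auto)
  text \<open>\<open>V\<close> has independent columns, so it can be cancelled on the left.\<close>
  have "V * (Z * V) = (V * Z) * V" using assoc_mult_mat[OF V Z V] by simp
  also have "\<dots> = V * 1\<^sub>m s" unfolding VZ KV using V by simp
  finally have "Z * V = 1\<^sub>m s"
    using inj_mat_mult_left_cancel[OF V _ mult_carrier_mat[OF Z V] one_carrier_mat] inj by simp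
  then show thesis using that V Z VZ by blast
qed

text \<open>The complement is obtained by splitting the idempotent \<open>1 - U W\<close>.\<close>
lemma split_mono_complement:
  fixes U :: "'a::field mat"
  assumes U: "U \<in> carrier_mat d c" and W: "W \<in> carrier_mat c d" and WU: "W * U = 1\<^sub>m c"
  obtains s V Z where "V \<in> carrier_mat d s" "Z \<in> carrier_mat s d" "W * V = 0\<^sub>m c s" "Z * U = 0\<^sub>m s c"
    "Z * V = 1\<^sub>m s" "V * Z = 1\<^sub>m d - U * W"
proof -
  define K where "K = 1\<^sub>m d - U * W"
  have UW: "U * W \<in> carrier_mat d d" using U W by simp
  have K: "K \<in> carrier_mat d d" unfolding K_def using UW by (rule minus_carrier_mat)
  have UWU: "(U * W) * U = U" using U W WU by (simp add: assoc_mult_mat)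
  have WUW: "W * (U * W) = W" using U W WU by (simp add: assoc_mult_mat[symmetric])
  have KU: "K * U = 0\<^sub>m d c"
    unfolding K_def using minus_mult_distrib_mat[OF one_carrier_mat UW U] UWU U by simp
  have WK: "W * K = 0\<^sub>m c d"
    unfolding K_def using mult_minus_distrib_mat[OF W one_carrier_mat UW] WUW W by simp
  have "K * K = K * 1\<^sub>m d - (K * U) * W"
    using mult_minus_distrib_mat[OF K one_carrier_mat UW] K U W by (simp add: K_def assoc_mult_mat)
  then have KK: "K * K = K" unfolding KU using K W by (auto intro!: eq_matI)
  obtain s V Z where V: "V \<in> carrier_mat d s" and Z: "Z \<in> carrier_mat s d"
    and VZ: "V * Z = K" and ZV: "Z * V = 1\<^sub>m s"
    by (rule vec_space.idempotent_factorization[OF K KK])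
  have "W * V = W * V * (Z * V)" using ZV W V by simp
  also have "\<dots> = W * (V * Z) * V"
    using assoc_mult_mat[OF mult_carrier_mat[OF W V] Z V] assoc_mult_mat[OF W V Z] by simp
  finally have WV: "W * V = 0\<^sub>m c s" unfolding VZ WK using V by simp
  have "Z * U = (Z * V) * (Z * U)" using ZV Z U by simp
  also have "\<dots> = Z * ((V * Z) * U)"
    using assoc_mult_mat[OF Z V mult_carrier_mat[OF Z U]] assoc_mult_mat[OF V Z U] by simp
  finally have "Z * U = Z * ((V * Z) * U)" .
  then have ZU: "Z * U = 0\<^sub>m s c" unfolding VZ KU using Z by simp
  show thesis using that V Z WV ZU ZV VZ unfolding K_def by blast
qed

lemma mat_add_minus: "A \<in> carrier_mat a b \<Longrightarrow> B \<in> carrier_mat a b \<Longrightarrow> A + (B - A) = (B :: 'a::field mat)"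
  by (intro eq_matI) auto

lemma mat_minus_zero: "A \<in> carrier_mat a b \<Longrightarrow> A - 0\<^sub>m a b = (A :: 'a::field mat)"
  by (intro eq_matI) auto

lemma four_block_mat_zero_cols: "A \<in> carrier_mat a b \<Longrightarrow> four_block_mat A (0\<^sub>m a 0) (0\<^sub>m 0 b) (0\<^sub>m 0 0) = A"
  by (intro eq_matI) auto

lemma four_block_mat_column_mult:
  fixes X :: "'a::field mat"
  assumes X: "X \<in> carrier_mat p d'" and Y: "Y \<in> carrier_mat q d'" and A: "A \<in> carrier_mat d' d"
  shows "four_block_mat X (0\<^sub>m p 0) Y (0\<^sub>m q 0) * A = four_block_mat (X * A) (0\<^sub>m p 0) (Y * A) (0\<^sub>m q 0)"
proof -
  have "four_block_mat X (0\<^sub>m p 0) Y (0\<^sub>m q 0) * four_block_mat A (0\<^sub>m d' 0) (0\<^sub>m 0 d) (0\<^sub>m 0 0) =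
    four_block_mat (X * A + 0\<^sub>m p 0 * 0\<^sub>m 0 d) (X * 0\<^sub>m d' 0 + 0\<^sub>m p 0 * 0\<^sub>m 0 0)
      (Y * A + 0\<^sub>m q 0 * 0\<^sub>m 0 d) (Y * 0\<^sub>m d' 0 + 0\<^sub>m q 0 * 0\<^sub>m 0 0)"
    by (rule mult_four_block_mat) (use X Y A in auto)
  then show ?thesis unfolding four_block_mat_zero_cols[OF A] using X Y A by simp
qed

lemma mult_four_block_mat_row:
  fixes A :: "'a::field mat"
  assumes A: "A \<in> carrier_mat d' d" and U: "U \<in> carrier_mat d c" and V: "V \<in> carrier_mat d s"
  shows "A * four_block_mat U V (0\<^sub>m 0 c) (0\<^sub>m 0 s) = four_block_mat (A * U) (A * V) (0\<^sub>m 0 c) (0\<^sub>m 0 s)"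
proof -
  have "four_block_mat A (0\<^sub>m d' 0) (0\<^sub>m 0 d) (0\<^sub>m 0 0) * four_block_mat U V (0\<^sub>m 0 c) (0\<^sub>m 0 s) =
    four_block_mat (A * U + 0\<^sub>m d' 0 * 0\<^sub>m 0 c) (A * V + 0\<^sub>m d' 0 * 0\<^sub>m 0 s)
      (0\<^sub>m 0 d * U + 0\<^sub>m 0 0 * 0\<^sub>m 0 c) (0\<^sub>m 0 d * V + 0\<^sub>m 0 0 * 0\<^sub>m 0 s)"
    by (rule mult_four_block_mat) (use A U V in auto)
  then show ?thesis unfolding four_block_mat_zero_cols[OF A] using A U V by simp
qed

lemma four_block_mat_eq_zero_diag:
  fixes A :: "'a::field mat"
  assumes "A \<in> carrier_mat a c" "D \<in> carrier_mat b e" "four_block_mat A B C D = 0\<^sub>m (a+b) (c+e)"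
  shows "A = 0\<^sub>m a c" "D = 0\<^sub>m b e"
proof -
  show "A = 0\<^sub>m a c"
  proof (rule eq_matI)
    fix r k assume "r < dim_row (0\<^sub>m a c :: 'a mat)" "k < dim_col (0\<^sub>m a c :: 'a mat)"
    then have "four_block_mat A B C D $$ (r, k) = A $$ (r, k)" using assms(1,2) by simp
    then show "A $$ (r, k) = 0\<^sub>m a c $$ (r, k)" using assms(3) \<open>r < _\<close> \<open>k < _\<close> by simp
  qed (use assms in auto)
  show "D = 0\<^sub>m b e"
  proof (rule eq_matI)
    fix r k assume "r < dim_row (0\<^sub>m b e :: 'a mat)" "k < dim_col (0\<^sub>m b e :: 'a mat)"
    then have "four_block_mat A B C D $$ (a + r, c + k) = D $$ (r, k)" using assms(1,2) by simp
    then show "D $$ (r, k) = 0\<^sub>m b e $$ (r, k)" using assms(3) \<open>r < _\<close> \<open>k < _\<close> by simp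
  qed (use assms in auto)
qed

definition shift_mat :: "nat \<Rightarrow> nat \<Rightarrow> nat \<Rightarrow> 'a::{zero,one} mat" where
  "shift_mat r c s = mat r c (\<lambda>(k',k). if k' = k + s then 1 else 0)"

lemma shift_mat_carrier[simp]: "shift_mat r c s \<in> carrier_mat r c" unfolding shift_mat_def by simp
lemma shift_mat_dims[simp]: "dim_row (shift_mat r c s) = r" "dim_col (shift_mat r c s) = c" unfolding shift_mat_def by simp_all

lemma sum_delta_mult: fixes f :: "nat \<Rightarrow> 'a::semiring_1"
  shows "(\<Sum>x\<in>{0..<m}. f x * (if x = K then 1 else 0)) = (if K < m then f K else 0)"
proof -
  have "(\<Sum>x\<in>{0..<m}. f x * (if x = K then 1 else 0)) = (\<Sum>x\<in>{0..<m}. if x = K then f K else 0)"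
    by (rule sum.cong) auto
  also have "\<dots> = (if K < m then f K else 0)" by (simp add: sum.delta')
  finally show ?thesis .
qed

lemma sum_delta_mult_left: fixes f :: "nat \<Rightarrow> 'a::semiring_1"
  shows "(\<Sum>x\<in>{0..<m}. (if K = x + s then 1 else 0) * f x) = (if s \<le> K \<and> K - s < m then f (K - s) else 0)"
proof -
  have "(\<Sum>x\<in>{0..<m}. (if K = x + s then 1 else 0) * f x) = (\<Sum>x\<in>{0..<m}. if x = K - s then (if s \<le> K then f x else 0) else 0)"
    by (rule sum.cong) auto
  also have "\<dots> = (if K - s < m then (if s \<le> K then f (K - s) else 0) else 0)" by (simp add: sum.delta')
  finally show ?thesis by auto
qed

lemma mult_shift_mat_right: fixes A :: "'a::comm_ring_1 mat"
  assumes "A \<in> carrier_mat p c'"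
  shows "A * shift_mat c' c s = mat p c (\<lambda>(r,k). if k + s < c' then A $$ (r, k+s) else 0)"
proof (rule eq_matI)
  fix r k assume rk: "r < dim_row (mat p c (\<lambda>(r,k). if k + s < c' then A $$ (r, k+s) else 0))"
    "k < dim_col (mat p c (\<lambda>(r,k). if k + s < c' then A $$ (r, k+s) else 0))"
  have "(A * shift_mat c' c s) $$ (r,k) = row A r \<bullet> col (shift_mat c' c s) k" using rk assms by simp
  also have "\<dots> = (\<Sum>x\<in>{0..<c'}. A $$ (r,x) * (if x = k + s then 1 else 0))"
    unfolding scalar_prod_def using rk assms by (simp add: shift_mat_def)
  also have "\<dots> = (if k + s < c' then A $$ (r, k+s) else 0)" by (rule sum_delta_mult)
  finally show "(A * shift_mat c' c s) $$ (r,k) = mat p c (\<lambda>(r,k). if k + s < c' then A $$ (r, k+s) else 0) $$ (r,k)"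
    using rk by simp
qed (use assms in auto)

lemma mult_shift_mat_left: fixes B :: "'a::comm_ring_1 mat"
  assumes "B \<in> carrier_mat c e"
  shows "shift_mat r c s * B = mat r e (\<lambda>(k',q). if s \<le> k' \<and> k' - s < c then B $$ (k' - s, q) else 0)"
proof (rule eq_matI)
  fix k' q assume rk: "k' < dim_row (mat r e (\<lambda>(k',q). if s \<le> k' \<and> k' - s < c then B $$ (k' - s, q) else 0))"
    "q < dim_col (mat r e (\<lambda>(k',q). if s \<le> k' \<and> k' - s < c then B $$ (k' - s, q) else 0))"
  have "(shift_mat r c s * B) $$ (k',q) = row (shift_mat r c s) k' \<bullet> col B q" using rk assms by simp
  also have "\<dots> = (\<Sum>x\<in>{0..<c}. (if k' = x + s then 1 else 0) * B $$ (x,q))"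
    unfolding scalar_prod_def using rk assms by (simp add: shift_mat_def)
  also have "\<dots> = (if s \<le> k' \<and> k' - s < c then B $$ (k' - s, q) else 0)" by (rule sum_delta_mult_left)
  finally show "(shift_mat r c s * B) $$ (k',q) = mat r e (\<lambda>(k',q). if s \<le> k' \<and> k' - s < c then B $$ (k' - s, q) else 0) $$ (k',q)"
    using rk by simp
qed (use assms in auto)

lemma shift_mat_mult_vec: fixes y :: "'a::comm_ring_1 vec"
  assumes "y \<in> carrier_vec c"
  shows "shift_mat r c s *\<^sub>v y = vec r (\<lambda>k'. if s \<le> k' \<and> k' - s < c then y $ (k' - s) else 0)"
proof (rule eq_vecI)
  fix k' assume k': "k' < dim_vec (vec r (\<lambda>k'. if s \<le> k' \<and> k' - s < c then y $ (k' - s) else 0))"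
  have "(shift_mat r c s *\<^sub>v y) $ k' = row (shift_mat r c s) k' \<bullet> y" using k' by simp
  also have "\<dots> = (\<Sum>x\<in>{0..<c}. (if k' = x + s then 1 else 0) * y $ x)"
    unfolding scalar_prod_def using k' assms by (simp add: shift_mat_def)
  also have "\<dots> = (if s \<le> k' \<and> k' - s < c then y $ (k' - s) else 0)" by (rule sum_delta_mult_left)
  finally show "(shift_mat r c s *\<^sub>v y) $ k' = vec r (\<lambda>k'. if s \<le> k' \<and> k' - s < c then y $ (k' - s) else 0) $ k'"
    using k' by simp
qed simp

lemma shift_mat_mult: "(shift_mat r m s1 :: 'a::comm_ring_1 mat) * shift_mat m c s2 =
   mat r c (\<lambda>(k1,k2). if k1 = k2 + s2 + s1 \<and> k2 + s2 < m then 1 else 0)"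
  by (subst mult_shift_mat_left[OF shift_mat_carrier]) (auto simp: shift_mat_def intro!: eq_matI)

lemma sum_scalar_prod_col:
  fixes P :: "'a::comm_ring_1 mat"
  assumes "P \<in> carrier_mat p d" "q \<in> carrier_vec p" "v \<in> carrier_vec d"
  shows "(\<Sum>r\<in>{0..<d}. (q \<bullet> col P r) * v $ r) = q \<bullet> (P *\<^sub>v v)"
proof -
  have "q \<bullet> (P *\<^sub>v v) = (transpose_mat P *\<^sub>v q) \<bullet> v" using assms by (simp add: transpose_vec_mult_scalar)
  also have "\<dots> = (\<Sum>r\<in>{0..<d}. (transpose_mat P *\<^sub>v q) $ r * v $ r)" unfolding scalar_prod_def using assms by simp
  also have "\<dots> = (\<Sum>r\<in>{0..<d}. (q \<bullet> col P r) * v $ r)"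
  proof (rule sum.cong)
    fix r assume r: "r \<in> {0..<d}"
    have "(transpose_mat P *\<^sub>v q) $ r = col P r \<bullet> q" using r assms by simp
    also have "\<dots> = q \<bullet> col P r" using assms r by (intro comm_scalar_prod[of _ p]) auto
    finally show "(transpose_mat P *\<^sub>v q) $ r * v $ r = (q \<bullet> col P r) * v $ r" by simp
  qed simp
  finally show ?thesis by simp
qed

lemma nxt_mod: "nxt n ((j + m) mod n) = (j + Suc m) mod n"
  unfolding nxt_def by (simp add: mod_Suc_eq)

lemma nxt_lt: "1 \<le> n \<Longrightarrow> nxt n j < n"
  unfolding nxt_def by simp

lemma is_rep_arr_carrier: "is_rep n l M \<Longrightarrow> i < n \<Longrightarrow> arr M i \<in> carrier_mat (dimv M (nxt n i)) (dimv M i)"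
  unfolding is_rep_def by auto

definition quiver_rep :: "nat \<Rightarrow> 'k::field rep \<Rightarrow> bool" where
  "quiver_rep n M \<longleftrightarrow> (\<forall>i<n. arr M i \<in> carrier_mat (dimv M (nxt n i)) (dimv M i))"

lemma is_rep_quiver_rep: "is_rep n l M \<Longrightarrow> quiver_rep n M"
  unfolding is_rep_def quiver_rep_def by blast

lemma quiver_rep_pathmat_carrier:
  assumes M: "quiver_rep n M" and j: "j < n"
  shows "pathmat n M j m \<in> carrier_mat (dimv M ((j + m) mod n)) (dimv M j)"
proof (induction m)
  case (Suc m)
  have "(j + m) mod n < n" using j by simp
  then show ?case using Suc M nxt_mod[of n j m] unfolding quiver_rep_def by auto
qed (use j in simp)

lemma pathmat_carrier:
  assumes "is_rep n l M" "1 \<le> n" "j < n"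
  shows "pathmat n M j m \<in> carrier_mat (dimv M ((j+m) mod n)) (dimv M j)"
  using quiver_rep_pathmat_carrier[OF is_rep_quiver_rep[OF assms(1)] assms(3)] .

lemma pathmat_one:
  assumes "is_rep n l M" "1 \<le> n" "j < n"
  shows "pathmat n M j (Suc 0) = arr M j"
  using is_rep_arr_carrier[OF assms(1,3)] assms by simp

lemma pathmat_add:
  assumes "is_rep n l M" "1 \<le> n" "j < n"
  shows "pathmat n M j (m + k) = pathmat n M ((j+m) mod n) k * pathmat n M j m"
proof (induction k)
  case 0
  then show ?case using pathmat_carrier[OF assms, of m] by simp
next
  case (Suc k)
  have jm: "(j+m) mod n < n" using assms by simp
  have c1: "pathmat n M j m \<in> carrier_mat (dimv M ((j+m) mod n)) (dimv M j)"
    using pathmat_carrier[OF assms] by simp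
  have c2: "pathmat n M ((j+m) mod n) k \<in> carrier_mat (dimv M (((j+m) mod n + k) mod n)) (dimv M ((j+m) mod n))"
    using pathmat_carrier[OF assms(1,2) jm] by simp
  have idx: "((j+m) mod n + k) mod n = (j + (m+k)) mod n" by (simp add: mod_add_left_eq add.assoc)
  have c3: "arr M ((j + (m+k)) mod n) \<in> carrier_mat (dimv M (nxt n ((j + (m+k)) mod n))) (dimv M ((j + (m+k)) mod n))"
    using is_rep_arr_carrier[OF assms(1)] assms by simp
  have "pathmat n M j (m + Suc k) = arr M ((j + (m+k)) mod n) * pathmat n M j (m + k)" by simp
  also have "\<dots> = arr M ((j + (m+k)) mod n) * (pathmat n M ((j+m) mod n) k * pathmat n M j m)" using Suc by simp
  also have "\<dots> = (arr M ((j + (m+k)) mod n) * pathmat n M ((j+m) mod n) k) * pathmat n M j m"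
    using c1 c2 c3 idx by (metis assoc_mult_mat)
  also have "\<dots> = pathmat n M ((j+m) mod n) (Suc k) * pathmat n M j m" using idx by simp
  finally show ?case .
qed

lemma quiver_rep_hom_pathmat:
  assumes M: "quiver_rep n M" and N: "quiver_rep n N" and f: "is_hom n M N f" and j: "j < n"
  shows "f ((j+m) mod n) * pathmat n M j m = pathmat n N j m * f j"
proof (induction m)
  case 0
  have "f j \<in> carrier_mat (dimv N j) (dimv M j)" using f j unfolding is_hom_def by auto
  then show ?case using j by simp
next
  case (Suc m)
  let ?q = "(j+m) mod n"
  have q: "?q < n" using j by simp
  have cM: "pathmat n M j m \<in> carrier_mat (dimv M ?q) (dimv M j)" by (rule quiver_rep_pathmat_carrier[OF M j])
  have cN: "pathmat n N j m \<in> carrier_mat (dimv N ?q) (dimv N j)" by (rule quiver_rep_pathmat_carrier[OF N j])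
  have aM: "arr M ?q \<in> carrier_mat (dimv M (nxt n ?q)) (dimv M ?q)" using M q unfolding quiver_rep_def by blast
  have aN: "arr N ?q \<in> carrier_mat (dimv N (nxt n ?q)) (dimv N ?q)" using N q unfolding quiver_rep_def by blast
  have fq: "f ?q \<in> carrier_mat (dimv N ?q) (dimv M ?q)" using f q unfolding is_hom_def by auto
  have fq': "f (nxt n ?q) \<in> carrier_mat (dimv N (nxt n ?q)) (dimv M (nxt n ?q))"
    using f q nxt_lt[of n] unfolding is_hom_def by auto
  have fj: "f j \<in> carrier_mat (dimv N j) (dimv M j)" using f j unfolding is_hom_def by auto
  have comm: "arr N ?q * f ?q = f (nxt n ?q) * arr M ?q" using f q unfolding is_hom_def by auto
  have "f ((j + Suc m) mod n) * pathmat n M j (Suc m) = f (nxt n ?q) * (arr M ?q * pathmat n M j m)"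
    using nxt_mod[of n j m] by simp
  also have "\<dots> = (f (nxt n ?q) * arr M ?q) * pathmat n M j m" using assoc_mult_mat[OF fq' aM cM] by simp
  also have "\<dots> = arr N ?q * (f ?q * pathmat n M j m)" unfolding comm[symmetric] using assoc_mult_mat[OF aN fq cM] .
  also have "\<dots> = (arr N ?q * pathmat n N j m) * f j" unfolding Suc using assoc_mult_mat[OF aN cN fj] by simp
  also have "\<dots> = pathmat n N j (Suc m) * f j" by simp
  finally show ?case .
qed

lemma hom_pathmat:
  assumes "is_rep n l M" "is_rep n l N" "is_hom n M N f" "1 \<le> n" "j < n"
  shows "f ((j+m) mod n) * pathmat n M j m = pathmat n N j m * f j"
  using quiver_rep_hom_pathmat[OF is_rep_quiver_rep[OF assms(1)] is_rep_quiver_rep[OF assms(2)] assms(3,5)] .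

lemma pathmat_mult_vec_carrier:
  assumes "is_rep n l M" "1 \<le> n" "j < n" "z \<in> carrier_vec (dimv M j)"
  shows "pathmat n M j m *\<^sub>v z \<in> carrier_vec (dimv M ((j+m) mod n))"
  by (rule mult_mat_vec_carrier[OF pathmat_carrier[OF assms(1-3)] assms(4)])

lemma pathmat_mult_vec_comp:
  assumes "is_rep n l M" "1 \<le> n" "j < n" "z \<in> carrier_vec (dimv M j)" "w = (j+m) mod n"
  shows "pathmat n M w s *\<^sub>v (pathmat n M j m *\<^sub>v z) = pathmat n M j (m+s) *\<^sub>v z"
proof -
  have w: "w < n" using assms by simp
  show ?thesis
    unfolding pathmat_add[OF assms(1-3), of m s] assms(5)[symmetric]
    using pathmat_carrier[OF assms(1-3), of m] pathmat_carrier[OF assms(1,2) w, of s] assms(4,5)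
    by (metis assoc_mult_mat_vec)
qed

lemma arr_pathmat_mult_vec:
  assumes "is_rep n l M" "1 \<le> n" "i < n" "x \<in> carrier_vec (dimv M i)" "(i + e) mod n = j"
  shows "arr M j *\<^sub>v (pathmat n M i e *\<^sub>v x) = pathmat n M i (Suc e) *\<^sub>v x"
proof -
  have j: "j < n" using assms by auto
  have "arr M j \<in> carrier_mat (dimv M (nxt n j)) (dimv M j)" using is_rep_arr_carrier[OF assms(1) j] .
  moreover have "pathmat n M i e \<in> carrier_mat (dimv M j) (dimv M i)" using pathmat_carrier[OF assms(1-3), of e] unfolding assms(5) .
  ultimately show ?thesis using assms(4,5) by (simp add: assoc_mult_mat_vec)
qed

definition paths_vanish :: "nat \<Rightarrow> 'k::field rep \<Rightarrow> nat \<Rightarrow> bool" where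
  "paths_vanish n M b \<longleftrightarrow> (\<forall>j<n. pathmat n M j b = 0\<^sub>m (dimv M ((j+b) mod n)) (dimv M j))"

lemma pathmat_mult_vec_zero_mono:
  assumes "is_rep n l M" "1 \<le> n" "j < n" "z \<in> carrier_vec (dimv M j)"
    and zero: "pathmat n M j b *\<^sub>v z = 0\<^sub>v (dimv M ((j+b) mod n))" and "b \<le> m"
  shows "pathmat n M j m *\<^sub>v z = 0\<^sub>v (dimv M ((j+m) mod n))"
proof -
  obtain k where m: "m = b + k" using \<open>b \<le> m\<close> le_iff_add by blast
  have jb: "(j + b) mod n < n" using assms by simp
  have "pathmat n M j m *\<^sub>v z = pathmat n M ((j+b) mod n) k *\<^sub>v (pathmat n M j b *\<^sub>v z)"
    using pathmat_mult_vec_comp[OF assms(1-4), of "(j+b) mod n" b k] m by simp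
  also have "\<dots> = 0\<^sub>v (dimv M (((j+b) mod n + k) mod n))"
    unfolding zero using pathmat_carrier[OF assms(1,2) jb, of k] by simp
  also have "((j+b) mod n + k) mod n = (j + m) mod n" using m by (simp add: mod_add_left_eq add.assoc)
  finally show ?thesis .
qed

lemma paths_vanish_mult_vec:
  assumes "is_rep n l M" "1 \<le> n" "j < n" "z \<in> carrier_vec (dimv M j)" "paths_vanish n M b" "b \<le> m"
  shows "pathmat n M j m *\<^sub>v z = 0\<^sub>v (dimv M ((j+m) mod n))"
  using assms(5,3,4) by (intro pathmat_mult_vec_zero_mono[OF assms(1-4) _ assms(6)]) (simp add: paths_vanish_def)

lemma pathmat_zero:
  assumes "is_rep n l M" "1 \<le> n" "j < n" "Suc l \<le> m"
  shows "pathmat n M j m = 0\<^sub>m (dimv M ((j+m) mod n)) (dimv M j)"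
proof -
  obtain k where m: "m = Suc l + k" using assms(4) le_Suc_ex by blast
  have z: "pathmat n M j (Suc l) = 0\<^sub>m (dimv M ((j + Suc l) mod n)) (dimv M j)"
    using assms unfolding is_rep_def by blast
  have jm: "(j + Suc l) mod n < n" using assms by simp
  have c2: "pathmat n M ((j+Suc l) mod n) k \<in> carrier_mat (dimv M (((j+Suc l) mod n + k) mod n)) (dimv M ((j+Suc l) mod n))"
    using pathmat_carrier[OF assms(1,2) jm] by simp
  have idx: "((j+Suc l) mod n + k) mod n = (j + m) mod n" using m by (simp add: mod_add_left_eq add.assoc)
  show ?thesis unfolding m pathmat_add[OF assms(1-3)] z using c2 idx m by simp
qed

section \<open>String modules\<close>

lemma mod_add_left_cancel_less:
  fixes a b i n :: nat
  assumes "a < n" "b < n" "(i + a) mod n = (i + b) mod n"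
  shows "a = b"
proof -
  have "(int i + int a) mod int n = (int i + int b) mod int n"
    using assms(3) by (metis of_nat_add of_nat_mod)
  then have "((int i + int a) - int i) mod int n = ((int i + int b) - int i) mod int n"
    by (rule mod_diff_cong) simp
  then have "int a mod int n = int b mod int n" by simp
  then show ?thesis using assms(1,2) by (metis of_nat_mod mod_less of_nat_eq_iff)
qed

text \<open>Basis of the string module of length \<open>a\<close> with top at vertex \<open>i\<close>: at vertex \<open>j\<close> it
  consists of the images of the generator under the paths of lengths \<open>path_len n i j k\<close>
  (the \<open>k\<close>-th path from \<open>i\<close> to \<open>j\<close>) shorter than \<open>a\<close>, and \<open>string_dim n i a j\<close> counts them.
  The arrow \<open>j \<rightarrow> nxt n j\<close> shifts this index by \<open>wraps n i j\<close>.\<close>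

definition steps :: "nat \<Rightarrow> nat \<Rightarrow> nat \<Rightarrow> nat" where "steps n i j = (j + n - i) mod n"
definition path_len :: "nat \<Rightarrow> nat \<Rightarrow> nat \<Rightarrow> nat \<Rightarrow> nat" where "path_len n i j k = steps n i j + k * n"
definition string_dim :: "nat \<Rightarrow> nat \<Rightarrow> nat \<Rightarrow> nat \<Rightarrow> nat" where
  "string_dim n i a j = (if steps n i j < a then (a - 1 - steps n i j) div n + 1 else 0)"
definition wraps :: "nat \<Rightarrow> nat \<Rightarrow> nat \<Rightarrow> nat" where "wraps n i j = (if nxt n j = i then 1 else 0)"

lemma steps_lt: "1 \<le> n \<Longrightarrow> steps n i j < n" unfolding steps_def by simp

lemma steps_mod: assumes "1 \<le> n" "i < n" "j < n" shows "(i + steps n i j) mod n = j"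
proof -
  have "(i + steps n i j) mod n = (i + (j + n - i)) mod n" unfolding steps_def by (simp add: mod_add_right_eq)
  also have "i + (j + n - i) = j + n" using assms by simp
  finally show ?thesis using assms by simp
qed

lemma steps_unique: assumes "1 \<le> n" "i < n" "j < n" "r < n" "(i + r) mod n = j" shows "r = steps n i j"
  using mod_add_left_cancel_less[of r n "steps n i j" i] steps_mod[OF assms(1-3)] steps_lt[OF assms(1)] assms by simp

lemma path_len_mod: assumes "1 \<le> n" "i < n" "j < n" shows "(i + path_len n i j k) mod n = j"
  using steps_mod[OF assms] unfolding path_len_def by (metis add.assoc mod_mult_self1)

lemma path_len_cong: assumes "1 \<le> n" "i < n" "j < n" "(i + m) mod n = j" shows "m = path_len n i j (m div n)"
proof -
  have "(i + m mod n) mod n = j" using assms(4) by (simp add: mod_add_right_eq)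
  then have "m mod n = steps n i j" using steps_unique[OF assms(1-3)] assms(1) by simp
  then show ?thesis unfolding path_len_def using mod_div_mult_eq[of m n] by simp
qed

lemma path_len_inj: "1 \<le> n \<Longrightarrow> path_len n i j k = path_len n i j k' \<longleftrightarrow> k = k'"
  unfolding path_len_def by simp

lemma steps_self: "1 \<le> n \<Longrightarrow> i < n \<Longrightarrow> steps n i i = 0" unfolding steps_def by simp

lemma path_len_self: "1 \<le> n \<Longrightarrow> i < n \<Longrightarrow> path_len n i i k = k * n" unfolding path_len_def by (simp add: steps_self)

lemma string_dim_iff: assumes "1 \<le> n" shows "k < string_dim n i a j \<longleftrightarrow> path_len n i j k < a"
proof (cases "steps n i j < a")
  case True
  have "k < (a - 1 - steps n i j) div n + 1 \<longleftrightarrow> k \<le> (a - 1 - steps n i j) div n" by (simp add: less_Suc_eq_le)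
  also have "\<dots> \<longleftrightarrow> k * n \<le> a - 1 - steps n i j" using assms by (simp add: less_eq_div_iff_mult_less_eq)
  also have "\<dots> \<longleftrightarrow> path_len n i j k < a" unfolding path_len_def using True by linarith
  finally show ?thesis unfolding string_dim_def using True by simp
next
  case False
  then show ?thesis unfolding string_dim_def path_len_def by simp
qed

lemma string_dim_mono: assumes "1 \<le> n" "a \<le> b" shows "string_dim n i a j \<le> string_dim n i b j"
proof -
  have "\<And>k. k < string_dim n i a j \<Longrightarrow> k < string_dim n i b j" using string_dim_iff[OF assms(1)] assms(2) by (meson less_le_trans)
  then show ?thesis by (meson not_le order_less_irrefl)
qed

lemma string_dim_pos_self: "1 \<le> n \<Longrightarrow> i < n \<Longrightarrow> 1 \<le> a \<Longrightarrow> 0 < string_dim n i a i"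
  using string_dim_iff[of n 0 i a i] path_len_self[of n i 0] by simp

lemma steps_nxt: assumes "1 \<le> n" "i < n" "j < n"
  shows "steps n i (nxt n j) = (if nxt n j = i then 0 else steps n i j + 1)"
    and "nxt n j = i \<Longrightarrow> steps n i j + 1 = n"
proof -
  have nx: "nxt n j < n" using nxt_lt assms by simp
  have "nxt n j = Suc (i + steps n i j) mod n" unfolding nxt_def using steps_mod[OF assms] mod_Suc_eq by metis
  then have e: "(i + (steps n i j + 1)) mod n = nxt n j" by simp
  have r1: "steps n i j + 1 \<le> n" using steps_lt[OF assms(1), of i j] by simp
  show "steps n i (nxt n j) = (if nxt n j = i then 0 else steps n i j + 1)"
  proof (cases "nxt n j = i")
    case True
    then show ?thesis using steps_self assms by simp
  next
    case False
    have "steps n i j + 1 \<noteq> n"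
    proof
      assume h: "steps n i j + 1 = n"
      have "(i + (steps n i j + 1)) mod n = i" unfolding h using assms by simp
      then show False using e False by simp
    qed
    then have "steps n i j + 1 < n" using r1 by simp
    then show ?thesis using steps_unique[OF assms(1,2) nx _ e] False by simp
  qed
  show "nxt n j = i \<Longrightarrow> steps n i j + 1 = n"
  proof (rule ccontr)
    assume h: "nxt n j = i" "steps n i j + 1 \<noteq> n"
    then have "steps n i j + 1 < n" using r1 by simp
    then have "steps n i j + 1 = steps n i i" using steps_unique[OF assms(1,2,2) _ ] e h by simp
    then show False using steps_self assms by simp
  qed
qed

lemma path_len_shift: assumes "1 \<le> n" "i < n" "j < n"
  shows "path_len n i (nxt n j) k' = path_len n i j k + 1 \<longleftrightarrow> k' = k + wraps n i j"
proof (cases "nxt n j = i")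
  case True
  have r: "steps n i j + k * n + 1 = (k + 1) * n" using steps_nxt(2)[OF assms True] by simp
  show ?thesis unfolding path_len_def wraps_def using steps_nxt(1)[OF assms] True r mult_right_cancel[of n k' "k+1"] assms(1) by auto
next
  case False
  then show ?thesis using steps_nxt[OF assms] assms(1) unfolding path_len_def wraps_def by simp
qed

lemma string_dim_nxt: assumes "1 \<le> n" "i < n" "j < n"
  shows "k + wraps n i j < string_dim n i a (nxt n j) \<longleftrightarrow> path_len n i j k + 1 < a"
  using string_dim_iff[OF assms(1)] path_len_shift[OF assms, of "k + wraps n i j" k] by simp

lemma mod_sub_mult:
  fixes i t s n :: nat
  assumes "s * n \<le> t"
  shows "(i + (t - s * n)) mod n = (i + t) mod n"
proof -
  have "i + t = (i + (t - s*n)) + s * n" using assms by linarith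
  then show ?thesis by (metis mod_mult_self1)
qed

lemma mod_add_diff: fixes i e t n :: nat assumes "e \<le> t" shows "((i + e) mod n + (t - e)) mod n = (i + t) mod n"
proof -
  have "((i + e) mod n + (t - e)) mod n = (i + e + (t - e)) mod n" by (simp add: mod_add_left_eq)
  then show ?thesis using assms by simp
qed

definition string_arr :: "nat \<Rightarrow> nat \<Rightarrow> nat \<Rightarrow> nat \<Rightarrow> 'k::field mat" where
  "string_arr n i a j = shift_mat (string_dim n i a (nxt n j)) (string_dim n i a j) (wraps n i j)"

lemma string_arr_dims[simp]: "dim_row (string_arr n i a j) = string_dim n i a (nxt n j)" "dim_col (string_arr n i a j) = string_dim n i a j"
  unfolding string_arr_def by simp_all

lemma string_arr_carrier[simp]: "string_arr n i a j \<in> carrier_mat (string_dim n i a (nxt n j)) (string_dim n i a j)"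
  unfolding string_arr_def by simp

definition string_rep :: "nat \<Rightarrow> nat \<Rightarrow> nat \<Rightarrow> 'k::field rep" where
  "string_rep n i L = (\<lambda>j. string_dim n i L j, \<lambda>j. string_arr n i L j)"

lemma pathmat_string_rep:
  assumes n: "1 \<le> n" and i: "i < n" and j: "j < n"
  shows "pathmat n (string_rep n i L :: 'k::field rep) j m = mat (string_dim n i L ((j+m) mod n)) (string_dim n i L j)
     (\<lambda>(k1,k2). if path_len n i ((j+m) mod n) k1 = path_len n i j k2 + m then 1 else 0)"
proof (induction m)
  case 0
  show ?case unfolding string_rep_def using j path_len_inj[OF n] by (intro eq_matI) auto
next
  case (Suc m)
  let ?q = "(j+m) mod n"
  have q: "?q < n" using n by simp
  have q': "nxt n ?q = (j + Suc m) mod n" using nxt_mod n by simp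
  let ?P = "mat (string_dim n i L ?q) (string_dim n i L j) (\<lambda>(k1,k2). if path_len n i ?q k1 = path_len n i j k2 + m then 1 else (0::'k))"
  have "pathmat n (string_rep n i L :: 'k rep) j (Suc m) = arr (string_rep n i L :: 'k rep) ?q * pathmat n (string_rep n i L :: 'k rep) j m" by simp
  also have "\<dots> = string_arr n i L ?q * ?P" unfolding Suc by (simp add: string_rep_def)
  also have "\<dots> = mat (string_dim n i L (nxt n ?q)) (string_dim n i L j)
      (\<lambda>(k1,k2). if wraps n i ?q \<le> k1 \<and> k1 - wraps n i ?q < string_dim n i L ?q then ?P $$ (k1 - wraps n i ?q, k2) else 0)"
    unfolding string_arr_def by (rule mult_shift_mat_left) simp
  also have "\<dots> = mat (string_dim n i L ((j + Suc m) mod n)) (string_dim n i L j)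
     (\<lambda>(k1,k2). if path_len n i ((j + Suc m) mod n) k1 = path_len n i j k2 + Suc m then 1 else 0)"
  proof (rule eq_matI)
    fix k1 k2 assume kk: "k1 < dim_row (mat (string_dim n i L ((j + Suc m) mod n)) (string_dim n i L j)
     (\<lambda>(k1,k2). if path_len n i ((j + Suc m) mod n) k1 = path_len n i j k2 + Suc m then 1 else (0::'k)))"
      "k2 < dim_col (mat (string_dim n i L ((j + Suc m) mod n)) (string_dim n i L j)
     (\<lambda>(k1,k2). if path_len n i ((j + Suc m) mod n) k1 = path_len n i j k2 + Suc m then 1 else (0::'k)))"
    then have k1: "k1 < string_dim n i L (nxt n ?q)" and k2: "k2 < string_dim n i L j" using q' by auto
    show "mat (string_dim n i L (nxt n ?q)) (string_dim n i L j)
        (\<lambda>(k1,k2). if wraps n i ?q \<le> k1 \<and> k1 - wraps n i ?q < string_dim n i L ?q then ?P $$ (k1 - wraps n i ?q, k2) else 0) $$ (k1,k2)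
      = mat (string_dim n i L ((j + Suc m) mod n)) (string_dim n i L j)
        (\<lambda>(k1,k2). if path_len n i ((j + Suc m) mod n) k1 = path_len n i j k2 + Suc m then 1 else 0) $$ (k1,k2)"
    proof (cases "wraps n i ?q \<le> k1")
      case True
      have sh: "path_len n i (nxt n ?q) k1 = path_len n i ?q (k1 - wraps n i ?q) + 1" using path_len_shift[OF n i q, of k1 "k1 - wraps n i ?q"] True by simp
      have lt: "k1 - wraps n i ?q < string_dim n i L ?q" using string_dim_iff[OF n] k1 sh by simp
      show ?thesis using True lt k1 k2 sh q' by simp
    next
      case False
      then have "k1 = 0" "nxt n ?q = i" unfolding wraps_def by (auto split: if_splits)
      then have "path_len n i (nxt n ?q) k1 = 0" using path_len_self[OF n i] by simp
      then show ?thesis using False k1 k2 q' by simp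
    qed
  qed (use q' in auto)
  finally show ?case .
qed

lemma quiver_rep_string_rep: "quiver_rep n (string_rep n i a :: 'k::field rep)"
  unfolding quiver_rep_def string_rep_def by simp

lemma is_rep_string_rep:
  assumes n: "1 \<le> n" and i: "i < n"
  shows "is_rep n l (string_rep n i (Suc l) :: 'k::field rep)"
proof -
  have "pathmat n (string_rep n i (Suc l) :: 'k rep) j (Suc l) = 0\<^sub>m (string_dim n i (Suc l) ((j + Suc l) mod n))
    (string_dim n i (Suc l) j)" if j: "j < n" for j
    unfolding pathmat_string_rep[OF n i j] using string_dim_iff[OF n] by (intro eq_matI) auto
  then show ?thesis using quiver_rep_string_rep unfolding is_rep_def quiver_rep_def by (simp add: string_rep_def)
qed

lemma vec_index_id: "v \<in> carrier_vec d \<Longrightarrow> vec d (\<lambda>r. v $ r) = v"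
  by (auto intro!: eq_vecI)

definition orbit_mat :: "nat \<Rightarrow> 'k::field rep \<Rightarrow> nat \<Rightarrow> 'k vec \<Rightarrow> nat \<Rightarrow> nat \<Rightarrow> 'k mat" where
  "orbit_mat n M i x a j = mat (dimv M j) (string_dim n i a j) (\<lambda>(r,k). (pathmat n M i (path_len n i j k) *\<^sub>v x) $ r)"

locale cyclic_vector =
  fixes n l :: nat and M :: "'k::field rep" and i :: nat and x :: "'k vec" and a :: nat
  assumes rep: "is_rep n l M" and i: "i < n" and x: "x \<in> carrier_vec (dimv M i)"
    and x_killed: "pathmat n M i a *\<^sub>v x = 0\<^sub>v (dimv M ((i+a) mod n))"
begin

lemma n: "1 \<le> n"
  using i by simp

lemma generator_path_zero: "a \<le> m \<Longrightarrow> pathmat n M i m *\<^sub>v x = 0\<^sub>v (dimv M ((i+m) mod n))"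
  by (rule pathmat_mult_vec_zero_mono[OF rep n i x x_killed])

lemma orbit_mat_carrier: "j < n \<Longrightarrow> orbit_mat n M i x a j \<in> carrier_mat (dimv M j) (string_dim n i a j)"
  unfolding orbit_mat_def by simp

lemma orbit_vec_carrier: "j < n \<Longrightarrow> pathmat n M i (path_len n i j k) *\<^sub>v x \<in> carrier_vec (dimv M j)"
  using pathmat_mult_vec_carrier[OF rep n i x, of "path_len n i j k"] path_len_mod[OF n i] by simp

lemma orbit_mat_col: assumes "j < n" "k < string_dim n i a j"
  shows "col (orbit_mat n M i x a j) k = pathmat n M i (path_len n i j k) *\<^sub>v x"
proof -
  have "col (orbit_mat n M i x a j) k = vec (dimv M j) (\<lambda>r. (pathmat n M i (path_len n i j k) *\<^sub>v x) $ r)"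
    unfolding orbit_mat_def using assms by (simp add: col_mat)
  then show ?thesis using vec_index_id[OF orbit_vec_carrier[OF assms(1), of k]] by simp
qed

lemma orbit_mat_entry: assumes "j < n" "k < string_dim n i a j" "r < dimv M j"
  shows "orbit_mat n M i x a j $$ (r,k) = (pathmat n M i (path_len n i j k) *\<^sub>v x) $ r"
  unfolding orbit_mat_def using assms by simp

lemma arr_orbit_mat: assumes j: "j < n"
  shows "arr M j * orbit_mat n M i x a j = orbit_mat n M i x a (nxt n j) * string_arr n i a j"
proof (rule eq_matI)
  have nj: "nxt n j < n" using nxt_lt n by simp
  have A: "arr M j \<in> carrier_mat (dimv M (nxt n j)) (dimv M j)" using is_rep_arr_carrier[OF rep j] .
  have R: "orbit_mat n M i x a (nxt n j) * string_arr n i a j = mat (dimv M (nxt n j)) (string_dim n i a j)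
     (\<lambda>(r,k). if k + wraps n i j < string_dim n i a (nxt n j) then orbit_mat n M i x a (nxt n j) $$ (r, k + wraps n i j) else 0)"
    unfolding string_arr_def by (rule mult_shift_mat_right[OF orbit_mat_carrier[OF nj]])
  fix r k assume rk: "r < dim_row (orbit_mat n M i x a (nxt n j) * string_arr n i a j)" "k < dim_col (orbit_mat n M i x a (nxt n j) * string_arr n i a j)"
  then have r: "r < dimv M (nxt n j)" and k: "k < string_dim n i a j" using orbit_mat_carrier[OF nj] by auto
  let ?e = "path_len n i j k"
  have "(arr M j * orbit_mat n M i x a j) $$ (r,k) = row (arr M j) r \<bullet> col (orbit_mat n M i x a j) k"
    using A orbit_mat_carrier[OF j] r k by simp
  also have "\<dots> = (arr M j *\<^sub>v col (orbit_mat n M i x a j) k) $ r" using A r by simp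
  also have "\<dots> = (pathmat n M i (Suc ?e) *\<^sub>v x) $ r"
    unfolding orbit_mat_col[OF j k] using arr_pathmat_mult_vec[OF rep n i x path_len_mod[OF n i j]] by simp
  finally have L: "(arr M j * orbit_mat n M i x a j) $$ (r,k) = (pathmat n M i (Suc ?e) *\<^sub>v x) $ r" .
  show "(arr M j * orbit_mat n M i x a j) $$ (r,k) = (orbit_mat n M i x a (nxt n j) * string_arr n i a j) $$ (r,k)"
  proof (cases "k + wraps n i j < string_dim n i a (nxt n j)")
    case True
    have "path_len n i (nxt n j) (k + wraps n i j) = Suc ?e" using path_len_shift[OF n i j] by simp
    then show ?thesis unfolding L R using True r k orbit_mat_entry[OF nj True r] by simp
  next
    case False
    then have "a \<le> Suc ?e" using string_dim_nxt[OF n i j] by simp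
    then have "pathmat n M i (Suc ?e) *\<^sub>v x = 0\<^sub>v (dimv M ((i + Suc ?e) mod n))" by (rule generator_path_zero)
    moreover have "(i + Suc ?e) mod n = nxt n j" using path_len_mod[OF n i j, of k] n unfolding nxt_def
      by (metis add_Suc_right mod_Suc_eq)
    ultimately show ?thesis unfolding L R using False r k by simp
  qed
qed (insert is_rep_arr_carrier[OF rep j] orbit_mat_carrier[OF j] orbit_mat_carrier[OF nxt_lt[OF n, of j]], auto)

end

definition retract_mat :: "nat \<Rightarrow> 'k::field rep \<Rightarrow> nat \<Rightarrow> 'k vec \<Rightarrow> nat \<Rightarrow> nat \<Rightarrow> 'k mat" where
  "retract_mat n M i q a j = mat (string_dim n i a j) (dimv M j) (\<lambda>(k,c). q \<bullet> col (pathmat n M j (a - 1 - path_len n i j k)) c)"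

locale split_cyclic_vector = cyclic_vector n l M i x a for n l and M :: "'k::field rep" and i x a +
  fixes q :: "'k vec" and t :: nat
  assumes at: "a = Suc t" and q: "q \<in> carrier_vec (dimv M ((i+t) mod n))"
    and paths_vanish_a: "paths_vanish n M a"
    and q1: "q \<bullet> (pathmat n M i t *\<^sub>v x) = 1"
    and q0: "\<And>s. 1 \<le> s \<Longrightarrow> s * n \<le> t \<Longrightarrow> q \<bullet> (pathmat n M i (t - s*n) *\<^sub>v x) = 0"
begin

lemma retract_mat_carrier: "j < n \<Longrightarrow> retract_mat n M i q a j \<in> carrier_mat (string_dim n i a j) (dimv M j)"
  unfolding retract_mat_def by simp

lemma path_len_le: "k < string_dim n i a j \<Longrightarrow> path_len n i j k \<le> t"
  using string_dim_iff[OF n] at by simp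

lemma retract_path_carrier: assumes "j < n" "k < string_dim n i a j"
  shows "pathmat n M j (t - path_len n i j k) \<in> carrier_mat (dimv M ((i+t) mod n)) (dimv M j)"
proof -
  have "(j + (t - path_len n i j k)) mod n = (i + t) mod n"
    using mod_add_diff[OF path_len_le[OF assms(2)], of i n] path_len_mod[OF n i assms(1), of k] by simp
  then show ?thesis using pathmat_carrier[OF rep n assms(1), of "t - path_len n i j k"] by simp
qed

lemma retract_mat_row_scalar: assumes j: "j < n" and k: "k < string_dim n i a j" and v: "v \<in> carrier_vec (dimv M j)"
  shows "row (retract_mat n M i q a j) k \<bullet> v = q \<bullet> (pathmat n M j (t - path_len n i j k) *\<^sub>v v)"
proof -
  let ?P = "pathmat n M j (t - path_len n i j k)"
  have "row (retract_mat n M i q a j) k = vec (dimv M j) (\<lambda>c. q \<bullet> col ?P c)"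
    unfolding retract_mat_def using k at by (simp add: row_mat)
  then have "row (retract_mat n M i q a j) k \<bullet> v = (\<Sum>r\<in>{0..<dimv M j}. (q \<bullet> col ?P r) * v $ r)"
    unfolding scalar_prod_def using v by simp
  also have "\<dots> = q \<bullet> (?P *\<^sub>v v)" by (rule sum_scalar_prod_col[OF retract_path_carrier[OF j k] q v])
  finally show ?thesis .
qed

lemma retract_orbit_mat_entry:
  assumes j: "j < n" and k: "k < string_dim n i a j" and k': "k' < string_dim n i a j"
  shows "(retract_mat n M i q a j * orbit_mat n M i x a j) $$ (k, k')
    = q \<bullet> (pathmat n M i (path_len n i j k' + (t - path_len n i j k)) *\<^sub>v x)"
proof -
  have "(retract_mat n M i q a j * orbit_mat n M i x a j) $$ (k, k')
      = row (retract_mat n M i q a j) k \<bullet> col (orbit_mat n M i x a j) k'"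
    using retract_mat_carrier[OF j] orbit_mat_carrier[OF j] k k' by simp
  also have "\<dots> = q \<bullet> (pathmat n M j (t - path_len n i j k) *\<^sub>v (pathmat n M i (path_len n i j k') *\<^sub>v x))"
    unfolding orbit_mat_col[OF j k'] by (rule retract_mat_row_scalar[OF j k orbit_vec_carrier[OF j]])
  also have "\<dots> = q \<bullet> (pathmat n M i (path_len n i j k' + (t - path_len n i j k)) *\<^sub>v x)"
    using pathmat_mult_vec_comp[OF rep n i x path_len_mod[OF n i j, of k', symmetric]] by simp
  finally show ?thesis .
qed

text \<open>The entries below the diagonal vanish because the paths are longer than \<open>t\<close>, those above
  by the choice of \<open>q\<close>.\<close>
lemma retract_orbit_mat:
  assumes j: "j < n"
  shows "retract_mat n M i q a j * orbit_mat n M i x a j = 1\<^sub>m (string_dim n i a j)"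
proof (rule eq_matI)
  fix k k' assume kk: "k < dim_row (1\<^sub>m (string_dim n i a j) :: 'k mat)" "k' < dim_col (1\<^sub>m (string_dim n i a j) :: 'k mat)"
  then have k: "k < string_dim n i a j" and k': "k' < string_dim n i a j" by auto
  let ?e = "path_len n i j k" and ?e' = "path_len n i j k'"
  note E = retract_orbit_mat_entry[OF j k k']
  have le: "?e \<le> t" "?e' \<le> t" using path_len_le k k' by auto
  show "(retract_mat n M i q a j * orbit_mat n M i x a j) $$ (k,k') = 1\<^sub>m (string_dim n i a j) $$ (k,k')"
  proof (cases k k' rule: linorder_cases)
    case less
    define d where "d = k' - k"
    have "k' = k + d" "1 \<le> d" using less d_def by auto
    then have "?e' = ?e + d * n" "n \<le> d * n" unfolding path_len_def by (simp_all add: algebra_simps)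
    then have big: "a \<le> ?e' + (t - ?e)" using at le n by linarith
    have "(i + (?e' + (t - ?e))) mod n = ((i + ?e') mod n + (t - ?e)) mod n"
      by (simp add: mod_add_left_eq add.assoc)
    also have "(i + ?e') mod n = (i + ?e) mod n" using path_len_mod[OF n i j] by simp
    finally have "(i + (?e' + (t - ?e))) mod n = (i + t) mod n" using mod_add_diff[OF le(1)] by simp
    then have "q \<bullet> (pathmat n M i (?e' + (t - ?e)) *\<^sub>v x) = 0"
      unfolding generator_path_zero[OF big] using q by simp
    then show ?thesis unfolding E using less kk by simp
  next
    case equal
    then show ?thesis unfolding E using q1 le kk by simp
  next
    case greater
    define s where "s = k - k'"
    have "k = k' + s" "1 \<le> s" using greater s_def by auto
    then have es: "?e = ?e' + s * n" "1 \<le> s" unfolding path_len_def by (simp_all add: algebra_simps)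
    then have "?e' + (t - ?e) = t - s * n" using le by simp
    then show ?thesis unfolding E using q0[of s] es le greater kk by simp
  qed
qed (use retract_mat_carrier orbit_mat_carrier assms in auto)

lemma retract_mat_arr_entry:
  assumes j: "j < n" and k': "k' < string_dim n i a (nxt n j)" and c: "c < dimv M j"
  shows "(retract_mat n M i q a (nxt n j) * arr M j) $$ (k', c)
    = q \<bullet> col (pathmat n M j (Suc (t - path_len n i (nxt n j) k'))) c"
proof -
  have nj: "nxt n j < n" using nxt_lt n by simp
  have A: "arr M j \<in> carrier_mat (dimv M (nxt n j)) (dimv M j)" using is_rep_arr_carrier[OF rep j] .
  let ?P = "pathmat n M (nxt n j) (t - path_len n i (nxt n j) k')"
  have "(retract_mat n M i q a (nxt n j) * arr M j) $$ (k', c) = row (retract_mat n M i q a (nxt n j)) k' \<bullet> col (arr M j) c"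
    using retract_mat_carrier[OF nj] A k' c by simp
  also have "\<dots> = q \<bullet> (?P *\<^sub>v col (arr M j) c)"
    using retract_mat_row_scalar[OF nj k'] A c by simp
  also have "?P *\<^sub>v col (arr M j) c = col (?P * arr M j) c"
    by (rule col_mult2[symmetric, OF retract_path_carrier[OF nj k'] A c])
  also have "?P * arr M j = pathmat n M j (Suc (t - path_len n i (nxt n j) k'))"
    using pathmat_add[OF rep n j, of 1 "t - path_len n i (nxt n j) k'"] pathmat_one[OF rep n j] unfolding nxt_def by simp
  finally show ?thesis .
qed

lemma retract_mat_arr:
  assumes j: "j < n"
  shows "retract_mat n M i q a (nxt n j) * arr M j = string_arr n i a j * retract_mat n M i q a j"
proof (rule eq_matI)
  have R: "string_arr n i a j * retract_mat n M i q a j = mat (string_dim n i a (nxt n j)) (dimv M j)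
     (\<lambda>(k',c). if wraps n i j \<le> k' \<and> k' - wraps n i j < string_dim n i a j then retract_mat n M i q a j $$ (k' - wraps n i j, c) else 0)"
    unfolding string_arr_def by (rule mult_shift_mat_left[OF retract_mat_carrier[OF j]])
  fix k' c assume kc: "k' < dim_row (string_arr n i a j * retract_mat n M i q a j)" "c < dim_col (string_arr n i a j * retract_mat n M i q a j)"
  then have k': "k' < string_dim n i a (nxt n j)" and c: "c < dimv M j" using retract_mat_carrier[OF j] by auto
  let ?e' = "path_len n i (nxt n j) k'"
  note L = retract_mat_arr_entry[OF j k' c]
  show "(retract_mat n M i q a (nxt n j) * arr M j) $$ (k',c) = (string_arr n i a j * retract_mat n M i q a j) $$ (k',c)"
  proof (cases "wraps n i j \<le> k'")
    case True
    define k where "k = k' - wraps n i j"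
    have kk: "k' = k + wraps n i j" using True k_def by simp
    have ee: "?e' = path_len n i j k + 1" using path_len_shift[OF n i j] kk by simp
    have klt: "k < string_dim n i a j" using string_dim_iff[OF n] k' ee by simp
    have "Suc (t - ?e') = t - path_len n i j k" using ee path_len_le[OF klt] string_dim_iff[OF n] k' at by simp
    then show ?thesis unfolding L R using True klt kc c k_def
      by (simp add: retract_mat_def at)
  next
    case False
    then have "wraps n i j = 1" "k' = 0" unfolding wraps_def by (auto split: if_splits)
    then have ni: "nxt n j = i" unfolding wraps_def by (auto split: if_splits)
    have "?e' = 0" using \<open>k' = 0\<close> ni path_len_self[OF n i] by simp
    then have "pathmat n M j (Suc (t - ?e')) = 0\<^sub>m (dimv M ((j + a) mod n)) (dimv M j)"
      using paths_vanish_a j at unfolding paths_vanish_def by simp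
    moreover have "(j + a) mod n = (i + t) mod n"
    proof -
      have "(j + a) mod n = (Suc j + t) mod n" using at by simp
      also have "\<dots> = (Suc j mod n + t) mod n" by (simp add: mod_add_left_eq)
      also have "Suc j mod n = i" using ni unfolding nxt_def .
      finally show ?thesis using i by (simp add: mod_add_left_eq)
    qed
    ultimately show ?thesis unfolding L R using False c kc q by simp
  qed
qed (insert is_rep_arr_carrier[OF rep j] retract_mat_carrier[OF j] retract_mat_carrier[OF nxt_lt[OF n, of j]], auto)

lemma retract_mat_generator: "retract_mat n M i q a i *\<^sub>v x = unit_vec (string_dim n i a i) 0"
proof -
  have c0: "0 < string_dim n i a i" using string_dim_pos_self[OF n i] at by simp
  have xc: "x = col (orbit_mat n M i x a i) 0" using orbit_mat_col[OF i c0] path_len_self[OF n i, of 0] x by simp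
  have "retract_mat n M i q a i *\<^sub>v x = retract_mat n M i q a i *\<^sub>v col (orbit_mat n M i x a i) 0" by (rule arg_cong[OF xc])
  also have "\<dots> = col (retract_mat n M i q a i * orbit_mat n M i x a i) 0"
    by (rule col_mult2[symmetric, OF retract_mat_carrier[OF i] orbit_mat_carrier[OF i] c0])
  finally have "retract_mat n M i q a i *\<^sub>v x = col (retract_mat n M i q a i * orbit_mat n M i x a i) 0" .
  also have "\<dots> = unit_vec (string_dim n i a i) 0" unfolding retract_orbit_mat[OF i] using c0 by simp
  finally show ?thesis .
qed

end

section \<open>A longest nonzero path and a functional separating it\<close>

lemma longest_nonzero_path:
  fixes M :: "'k::field rep"
  assumes "is_rep n l M" "1 \<le> n" "nonzero_rep n M"
  shows "\<exists>t i y. i < n \<and> y \<in> carrier_vec (dimv M i) \<and>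
     pathmat n M i t *\<^sub>v y \<noteq> 0\<^sub>v (dimv M ((i+t) mod n)) \<and> paths_vanish n M (Suc t)"
proof -
  define S where "S = {t. \<exists>j<n. pathmat n M j t \<noteq> 0\<^sub>m (dimv M ((j+t) mod n)) (dimv M j)}"
  obtain j0 where j0: "j0 < n" "0 < dimv M j0" using assms(3) unfolding nonzero_rep_def by auto
  have ne: "(1\<^sub>m (dimv M j0) :: 'k mat) \<noteq> 0\<^sub>m (dimv M j0) (dimv M j0)"
  proof
    assume eq: "(1\<^sub>m (dimv M j0) :: 'k mat) = 0\<^sub>m (dimv M j0) (dimv M j0)"
    have "(1\<^sub>m (dimv M j0) :: 'k mat) $$ (0,0) = 0\<^sub>m (dimv M j0) (dimv M j0) $$ (0,0)" using eq by simp
    then show False using j0 by simp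
  qed
  then have "0 \<in> S" unfolding S_def using j0 by (auto intro!: exI[of _ j0])
  have bnd: "S \<subseteq> {..l}"
  proof
    fix t assume "t \<in> S"
    then obtain j where "j < n" "pathmat n M j t \<noteq> 0\<^sub>m (dimv M ((j+t) mod n)) (dimv M j)" unfolding S_def by auto
    then show "t \<in> {..l}" using pathmat_zero[OF assms(1,2) \<open>j<n\<close>, of t] by (cases "Suc l \<le> t") auto
  qed
  have fin: "finite S" using bnd finite_subset by blast
  define t where "t = Max S"
  have tS: "t \<in> S" unfolding t_def using fin \<open>0 \<in> S\<close> by (intro Max_in) auto
  have "Suc t \<notin> S" using fin t_def by (metis Max_ge Suc_n_not_le_n)
  then have vanish: "paths_vanish n M (Suc t)" unfolding S_def paths_vanish_def by auto
  from tS obtain i where i: "i < n" "pathmat n M i t \<noteq> 0\<^sub>m (dimv M ((i+t) mod n)) (dimv M i)" unfolding S_def by auto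
  then obtain y where "y \<in> carrier_vec (dimv M i)" "pathmat n M i t *\<^sub>v y \<noteq> 0\<^sub>v (dimv M ((i+t) mod n))"
    using nonzero_mat_vec[OF pathmat_carrier[OF assms(1,2) i(1)]] by blast
  then show ?thesis using i vanish by blast
qed

lemma exists_scalar_prod_eq_one:
  fixes w :: "'a::field vec"
  assumes w: "w \<in> carrier_vec d" "w \<noteq> 0\<^sub>v d"
  shows "\<exists>q \<in> carrier_vec d. q \<bullet> w = 1"
proof -
  obtain r where r: "r < d" "w $ r \<noteq> 0" using w by (metis carrier_vecD eq_vecI index_zero_vec)
  define q where "q = (1 / (w $ r)) \<cdot>\<^sub>v unit_vec d r"
  have "q \<bullet> w = (1 / (w $ r)) * (unit_vec d r \<bullet> w)"
    unfolding q_def using w by (intro smult_scalar_prod_distrib) auto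
  also have "\<dots> = 1" using r w by (simp add: scalar_prod_left_unit)
  finally show ?thesis unfolding q_def by (intro bexI[of _ q]) (auto simp: q_def)
qed

lemma scalar_prod_transpose_pathmat:
  assumes rep: "is_rep n l M" and n: "1 \<le> n" and i: "i < n" and y: "y \<in> carrier_vec (dimv M i)"
    and v: "(i + m) mod n = v" and q: "q \<in> carrier_vec (dimv M ((v + L) mod n))"
  shows "(transpose_mat (pathmat n M v L) *\<^sub>v q) \<bullet> (pathmat n M i m *\<^sub>v y) = q \<bullet> (pathmat n M i (m + L) *\<^sub>v y)"
proof -
  have vn: "v < n" using v n by auto
  have P: "pathmat n M v L \<in> carrier_mat (dimv M ((v + L) mod n)) (dimv M v)" by (rule pathmat_carrier[OF rep n vn])
  have "pathmat n M i m *\<^sub>v y \<in> carrier_vec (dimv M v)" using pathmat_mult_vec_carrier[OF rep n i y] v by metis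
  then have "(transpose_mat (pathmat n M v L) *\<^sub>v q) \<bullet> (pathmat n M i m *\<^sub>v y)
      = q \<bullet> (pathmat n M v L *\<^sub>v (pathmat n M i m *\<^sub>v y))"
    using P q by (simp add: transpose_vec_mult_scalar)
  also have "\<dots> = q \<bullet> (pathmat n M i (m + L) *\<^sub>v y)" using pathmat_mult_vec_comp[OF rep n i y v[symmetric]] by simp
  finally show ?thesis .
qed

text \<open>Write \<open>w m\<close> for the image of \<open>y\<close> under the path of length \<open>m\<close> from \<open>i\<close>.  A functional \<open>q\<close>
  that is \<open>1\<close> on \<open>w t\<close> and vanishes on \<open>w (t - s n)\<close> for \<open>1 \<le> s \<le> T\<close> is corrected by
  \<open>c \<cdot> q \<circ> R\<close>, with \<open>R\<close> the cycle of length \<open>(T + 1) n\<close> at the end vertex, so that it also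
  vanishes on \<open>w (t - (T + 1) n)\<close>; the correction is invisible on the other vectors because
  paths of length greater than \<open>t\<close> vanish.\<close>
lemma separating_functional_step:
  assumes rep: "is_rep n l M" and n: "1 \<le> n" and i: "i < n" and y: "y \<in> carrier_vec (dimv M i)"
    and vanish: "paths_vanish n M (Suc t)" and T: "Suc T * n \<le> t"
    and q: "q \<in> carrier_vec (dimv M ((i+t) mod n))" and q1: "q \<bullet> (pathmat n M i t *\<^sub>v y) = 1"
    and q0: "\<And>s. 1 \<le> s \<Longrightarrow> s \<le> T \<Longrightarrow> s * n \<le> t \<Longrightarrow> q \<bullet> (pathmat n M i (t - s*n) *\<^sub>v y) = 0"
  shows "\<exists>q' \<in> carrier_vec (dimv M ((i+t) mod n)). q' \<bullet> (pathmat n M i t *\<^sub>v y) = 1 \<and>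
     (\<forall>s. 1 \<le> s \<and> s \<le> Suc T \<and> s * n \<le> t \<longrightarrow> q' \<bullet> (pathmat n M i (t - s*n) *\<^sub>v y) = 0)"
proof -
  define v where "v = (i+t) mod n"
  have v: "v < n" unfolding v_def using n by simp
  define w where "w = (\<lambda>m. pathmat n M i m *\<^sub>v y)"
  have wc: "w m \<in> carrier_vec (dimv M v)" if "(i + m) mod n = v" for m
    unfolding w_def using pathmat_mult_vec_carrier[OF rep n i y] that by metis
  have hi: "q \<bullet> w m = 0" if "Suc t \<le> m" "(i + m) mod n = v" for m
    using paths_vanish_mult_vec[OF rep n i y vanish that(1)] that(2) q unfolding w_def v_def by simp
  have vt: "(i + t) mod n = v" unfolding v_def by simp
  have vs: "(i + (t - s*n)) mod n = v" if "s * n \<le> t" for s using mod_sub_mult[OF that] v_def by simp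
  have vshift: "(i + (m + Suc T * n)) mod n = v" if "(i + m) mod n = v" for m
    using that by (metis add.assoc mod_mult_self1)
  have vv: "(v + Suc T * n) mod n = v" using v by (metis mod_mult_self1 mod_less)
  define p where "p = transpose_mat (pathmat n M v (Suc T * n)) *\<^sub>v q"
  have p: "p \<in> carrier_vec (dimv M v)"
    unfolding p_def using pathmat_carrier[OF rep n v, of "Suc T * n"] q vv v_def by auto
  have pw: "p \<bullet> w m = q \<bullet> w (m + Suc T * n)" if "(i + m) mod n = v" for m
    unfolding p_def w_def using scalar_prod_transpose_pathmat[OF rep n i y that] q vv v_def by simp
  define c where "c = q \<bullet> w (t - Suc T * n)"
  define q' where "q' = q - c \<cdot>\<^sub>v p"
  have q'c: "q' \<in> carrier_vec (dimv M v)" unfolding q'_def using q p v_def by auto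
  have q'w: "q' \<bullet> w m = q \<bullet> w m - c * (q \<bullet> w (m + Suc T * n))" if "(i + m) mod n = v" for m
    unfolding q'_def pw[OF that, symmetric] using q p wc[OF that] v_def
    by (simp add: minus_scalar_prod_distrib smult_scalar_prod_distrib)
  have "q' \<bullet> w t = 1"
    using q'w[OF vt] hi[OF _ vshift[OF vt]] q1 n unfolding w_def by simp
  moreover have "q' \<bullet> w (t - s*n) = 0" if s: "1 \<le> s" "s \<le> Suc T" "s * n \<le> t" for s
  proof (cases "s = Suc T")
    case True
    then show ?thesis using q'w[OF vs[OF s(3)]] q1 s(3) c_def unfolding w_def by simp
  next
    case False
    then have "s < Suc T" using s(2) by simp
    then have "s * n < Suc T * n" using n by (intro mult_strict_right_mono) auto
    then have "Suc t \<le> t - s*n + Suc T * n" using s(3) by linarith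
    then show ?thesis using q'w[OF vs[OF s(3)]] hi[OF _ vshift[OF vs[OF s(3)]]] q0[OF s(1) _ s(3)] False s(2)
      unfolding w_def by simp
  qed
  ultimately show ?thesis using q'c unfolding v_def w_def by blast
qed

lemma separating_functional:
  assumes rep: "is_rep n l M" and n: "1 \<le> n" and i: "i < n" and y: "y \<in> carrier_vec (dimv M i)"
    and nz: "pathmat n M i t *\<^sub>v y \<noteq> 0\<^sub>v (dimv M ((i+t) mod n))" and vanish: "paths_vanish n M (Suc t)"
  obtains q where "q \<in> carrier_vec (dimv M ((i+t) mod n))" "q \<bullet> (pathmat n M i t *\<^sub>v y) = 1"
    "\<And>s. 1 \<le> s \<Longrightarrow> s * n \<le> t \<Longrightarrow> q \<bullet> (pathmat n M i (t - s*n) *\<^sub>v y) = 0"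
proof -
  have "\<exists>q \<in> carrier_vec (dimv M ((i+t) mod n)). q \<bullet> (pathmat n M i t *\<^sub>v y) = 1 \<and>
     (\<forall>s. 1 \<le> s \<and> s \<le> T \<and> s * n \<le> t \<longrightarrow> q \<bullet> (pathmat n M i (t - s*n) *\<^sub>v y) = 0)" for T
  proof (induction T)
    case 0
    show ?case using exists_scalar_prod_eq_one[OF pathmat_mult_vec_carrier[OF rep n i y] nz] by auto
  next
    case (Suc T)
    then obtain q where q: "q \<in> carrier_vec (dimv M ((i+t) mod n))" "q \<bullet> (pathmat n M i t *\<^sub>v y) = 1"
      "\<And>s. 1 \<le> s \<Longrightarrow> s \<le> T \<Longrightarrow> s * n \<le> t \<Longrightarrow> q \<bullet> (pathmat n M i (t - s*n) *\<^sub>v y) = 0" by blast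
    show ?case
    proof (cases "Suc T * n \<le> t")
      case True
      show ?thesis by (rule separating_functional_step[OF rep n i y vanish True q])
    next
      case False
      then show ?thesis using q by (metis le_Suc_eq)
    qed
  qed
  moreover have "s \<le> t" if "1 \<le> s" "s * n \<le> t" for s
    using that n by (metis le_trans mult_le_mono2 nat_mult_1_right)
  ultimately show thesis using that by meson
qed

section \<open>Splitting off a direct summand\<close>

lemma pathmat_dsum:
  assumes X: "quiver_rep n X" and Y: "quiver_rep n Y" and j: "j < n"
  shows "pathmat n (dsum n X Y) j m = four_block_mat (pathmat n X j m)
    (0\<^sub>m (dimv X ((j+m) mod n)) (dimv Y j)) (0\<^sub>m (dimv Y ((j+m) mod n)) (dimv X j)) (pathmat n Y j m)"
proof (induction m)
  case 0
  show ?case using j unfolding dsum_def by (auto intro!: eq_matI)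
next
  case (Suc m)
  let ?q = "(j+m) mod n"
  have q: "?q < n" using j by simp
  have PX: "pathmat n X j m \<in> carrier_mat (dimv X ?q) (dimv X j)" by (rule quiver_rep_pathmat_carrier[OF X j])
  have PY: "pathmat n Y j m \<in> carrier_mat (dimv Y ?q) (dimv Y j)" by (rule quiver_rep_pathmat_carrier[OF Y j])
  have AX: "arr X ?q \<in> carrier_mat (dimv X (nxt n ?q)) (dimv X ?q)" using X q unfolding quiver_rep_def by blast
  have AY: "arr Y ?q \<in> carrier_mat (dimv Y (nxt n ?q)) (dimv Y ?q)" using Y q unfolding quiver_rep_def by blast
  have "pathmat n (dsum n X Y) j (Suc m) = four_block_mat (arr X ?q) (0\<^sub>m (dimv X (nxt n ?q)) (dimv Y ?q))
      (0\<^sub>m (dimv Y (nxt n ?q)) (dimv X ?q)) (arr Y ?q) *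
    four_block_mat (pathmat n X j m) (0\<^sub>m (dimv X ?q) (dimv Y j)) (0\<^sub>m (dimv Y ?q) (dimv X j)) (pathmat n Y j m)"
    using Suc by (simp add: dsum_def)
  also have "\<dots> = four_block_mat (pathmat n X j (Suc m)) (0\<^sub>m (dimv X (nxt n ?q)) (dimv Y j))
      (0\<^sub>m (dimv Y (nxt n ?q)) (dimv X j)) (pathmat n Y j (Suc m))"
    by (subst mult_four_block_mat[OF AX _ _ AY PX _ _ PY]) (use AX AY PX PY in auto)
  finally show ?case using nxt_mod[of n j m] by simp
qed

lemma dsum_is_rep_parts:
  assumes X: "quiver_rep n X" and Y: "quiver_rep n Y" and XY: "paths_vanish n (dsum n X Y) (Suc l)"
  shows "is_rep n l X" "is_rep n l Y"
proof -
  have "pathmat n X j (Suc l) = 0\<^sub>m (dimv X ((j + Suc l) mod n)) (dimv X j) \<and>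
        pathmat n Y j (Suc l) = 0\<^sub>m (dimv Y ((j + Suc l) mod n)) (dimv Y j)" if j: "j < n" for j
  proof -
    have "pathmat n (dsum n X Y) j (Suc l) = 0\<^sub>m (dimv X ((j + Suc l) mod n) + dimv Y ((j + Suc l) mod n))
      (dimv X j + dimv Y j)" using XY j unfolding paths_vanish_def by (simp add: dsum_def)
    then show ?thesis
      using four_block_mat_eq_zero_diag[OF quiver_rep_pathmat_carrier[OF X j] quiver_rep_pathmat_carrier[OF Y j]]
      unfolding pathmat_dsum[OF X Y j] by blast
  qed
  then show "is_rep n l X" "is_rep n l Y" using X Y unfolding is_rep_def quiver_rep_def by auto
qed

text \<open>\<open>U\<close> embeds the representation \<open>(c, C)\<close> into \<open>M\<close>, with retraction \<open>W\<close>.\<close>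
locale split_embedding =
  fixes n l :: nat and M :: "'k::field rep" and c :: "nat \<Rightarrow> nat" and U W C :: "nat \<Rightarrow> 'k mat"
  assumes rep: "is_rep n l M" and n: "1 \<le> n"
    and U: "\<And>j. j < n \<Longrightarrow> U j \<in> carrier_mat (dimv M j) (c j)"
    and W: "\<And>j. j < n \<Longrightarrow> W j \<in> carrier_mat (c j) (dimv M j)"
    and C: "\<And>j. j < n \<Longrightarrow> C j \<in> carrier_mat (c (nxt n j)) (c j)"
    and WU: "\<And>j. j < n \<Longrightarrow> W j * U j = 1\<^sub>m (c j)"
    and AU: "\<And>j. j < n \<Longrightarrow> arr M j * U j = U (nxt n j) * C j"
    and WA: "\<And>j. j < n \<Longrightarrow> W (nxt n j) * arr M j = C j * W j"

locale split_embedding_complement = split_embedding +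
  fixes s :: "nat \<Rightarrow> nat" and V Z :: "nat \<Rightarrow> 'k::field mat"
  assumes V: "\<And>j. j < n \<Longrightarrow> V j \<in> carrier_mat (dimv M j) (s j)"
    and Z: "\<And>j. j < n \<Longrightarrow> Z j \<in> carrier_mat (s j) (dimv M j)"
    and WV: "\<And>j. j < n \<Longrightarrow> W j * V j = 0\<^sub>m (c j) (s j)"
    and ZU: "\<And>j. j < n \<Longrightarrow> Z j * U j = 0\<^sub>m (s j) (c j)"
    and ZV: "\<And>j. j < n \<Longrightarrow> Z j * V j = 1\<^sub>m (s j)"
    and VZ: "\<And>j. j < n \<Longrightarrow> V j * Z j = 1\<^sub>m (dimv M j) - U j * W j"
begin

definition compl_arr :: "nat \<Rightarrow> 'k mat" where "compl_arr j = Z (nxt n j) * arr M j * V j"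
definition to_dsum :: "nat \<Rightarrow> 'k mat" where "to_dsum j = four_block_mat (W j) (0\<^sub>m (c j) 0) (Z j) (0\<^sub>m (s j) 0)"
definition from_dsum :: "nat \<Rightarrow> 'k mat" where "from_dsum j = four_block_mat (U j) (V j) (0\<^sub>m 0 (c j)) (0\<^sub>m 0 (s j))"
definition dsum_arr :: "nat \<Rightarrow> 'k mat" where "dsum_arr j = four_block_mat (C j) (0\<^sub>m (c (nxt n j)) (s j)) (0\<^sub>m (s (nxt n j)) (c j)) (compl_arr j)"

lemma nxt_less: "j < n \<Longrightarrow> nxt n j < n"
  using nxt_lt n by simp

lemma arr_carrier: "j < n \<Longrightarrow> arr M j \<in> carrier_mat (dimv M (nxt n j)) (dimv M j)"
  using is_rep_arr_carrier[OF rep] by simp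

lemma compl_arr_carrier: "j < n \<Longrightarrow> compl_arr j \<in> carrier_mat (s (nxt n j)) (s j)"
  unfolding compl_arr_def using Z nxt_less arr_carrier V by (meson mult_carrier_mat)

lemma to_dsum_carrier: "j < n \<Longrightarrow> to_dsum j \<in> carrier_mat (c j + s j) (dimv M j)"
  unfolding to_dsum_def using W Z by (metis add_0_right four_block_carrier_mat zero_carrier_mat)

lemma from_dsum_carrier: "j < n \<Longrightarrow> from_dsum j \<in> carrier_mat (dimv M j) (c j + s j)"
  unfolding from_dsum_def using U V by (metis add_0_right four_block_carrier_mat zero_carrier_mat)

lemma dsum_eq: "dsum n (c, C) (s, compl_arr) = (\<lambda>j. c j + s j, dsum_arr)"
  unfolding dsum_def dsum_arr_def by simp

lemma UW_VZ:
  assumes j: "j < n"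
  shows "U j * W j + V j * Z j = 1\<^sub>m (dimv M j)"
  unfolding VZ[OF j] by (rule mat_add_minus) (use U[OF j] W[OF j] in auto)

lemma quiver_rep_parts: "quiver_rep n (c, C)" "quiver_rep n (s, compl_arr)"
  unfolding quiver_rep_def using C compl_arr_carrier by auto

lemma to_dsum_from_dsum:
  assumes j: "j < n"
  shows "to_dsum j * from_dsum j = 1\<^sub>m (c j + s j)"
proof -
  have "to_dsum j * from_dsum j = four_block_mat (W j * U j + 0\<^sub>m (c j) 0 * 0\<^sub>m 0 (c j)) (W j * V j + 0\<^sub>m (c j) 0 * 0\<^sub>m 0 (s j))
    (Z j * U j + 0\<^sub>m (s j) 0 * 0\<^sub>m 0 (c j)) (Z j * V j + 0\<^sub>m (s j) 0 * 0\<^sub>m 0 (s j))"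
    unfolding to_dsum_def from_dsum_def by (rule mult_four_block_mat[OF W[OF j] zero_carrier_mat Z[OF j] zero_carrier_mat
      U[OF j] V[OF j] zero_carrier_mat zero_carrier_mat])
  then show ?thesis using WU[OF j] WV[OF j] ZU[OF j] ZV[OF j] by simp
qed

lemma from_dsum_to_dsum:
  assumes j: "j < n"
  shows "from_dsum j * to_dsum j = 1\<^sub>m (dimv M j)"
proof -
  have "from_dsum j * to_dsum j = four_block_mat (U j * W j + V j * Z j) (U j * 0\<^sub>m (c j) 0 + V j * 0\<^sub>m (s j) 0)
    (0\<^sub>m 0 (c j) * W j + 0\<^sub>m 0 (s j) * Z j) (0\<^sub>m 0 (c j) * 0\<^sub>m (c j) 0 + 0\<^sub>m 0 (s j) * 0\<^sub>m (s j) 0)"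
    unfolding to_dsum_def from_dsum_def by (rule mult_four_block_mat[OF U[OF j] V[OF j] zero_carrier_mat zero_carrier_mat
      W[OF j] zero_carrier_mat Z[OF j] zero_carrier_mat])
  also have "\<dots> = four_block_mat (1\<^sub>m (dimv M j)) (0\<^sub>m (dimv M j) 0) (0\<^sub>m 0 (dimv M j)) (1\<^sub>m 0)"
    using UW_VZ[OF j] U[OF j] V[OF j] W[OF j] Z[OF j] by (auto intro!: cong_four_block_mat eq_matI)
  finally show ?thesis by simp
qed

lemma dsum_arr_to_dsum:
  assumes j: "j < n"
  shows "dsum_arr j * to_dsum j = to_dsum (nxt n j) * arr M j"
proof -
  let ?j = "nxt n j"
  have L: "dsum_arr j * to_dsum j = four_block_mat (C j * W j + 0\<^sub>m (c ?j) (s j) * Z j) (C j * 0\<^sub>m (c j) 0 + 0\<^sub>m (c ?j) (s j) * 0\<^sub>m (s j) 0)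
    (0\<^sub>m (s ?j) (c j) * W j + compl_arr j * Z j) (0\<^sub>m (s ?j) (c j) * 0\<^sub>m (c j) 0 + compl_arr j * 0\<^sub>m (s j) 0)"
    unfolding dsum_arr_def to_dsum_def by (rule mult_four_block_mat[OF C[OF j] zero_carrier_mat zero_carrier_mat compl_arr_carrier[OF j]
      W[OF j] zero_carrier_mat Z[OF j] zero_carrier_mat])
  have R: "to_dsum ?j * arr M j = four_block_mat (W ?j * arr M j) (0\<^sub>m (c ?j) 0) (Z ?j * arr M j) (0\<^sub>m (s ?j) 0)"
    unfolding to_dsum_def by (rule four_block_mat_column_mult[OF W[OF nxt_less[OF j]] Z[OF nxt_less[OF j]] arr_carrier[OF j]])
  have DZ: "compl_arr j * Z j = Z ?j * arr M j"
  proof -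
    have ZA: "Z ?j * arr M j \<in> carrier_mat (s ?j) (dimv M j)" using Z[OF nxt_less[OF j]] arr_carrier[OF j] by simp
    have "compl_arr j * Z j = (Z ?j * arr M j) * (V j * Z j)" unfolding compl_arr_def using ZA V[OF j] Z[OF j] by (simp add: assoc_mult_mat)
    also have "\<dots> = (Z ?j * arr M j) * 1\<^sub>m (dimv M j) - (Z ?j * arr M j) * (U j * W j)"
      unfolding VZ[OF j] by (rule mult_minus_distrib_mat[OF ZA one_carrier_mat]) (use U[OF j] W[OF j] in simp)
    also have "(Z ?j * arr M j) * (U j * W j) = Z ?j * (arr M j * U j) * W j"
    proof -
      have e1: "(Z ?j * arr M j) * (U j * W j) = Z ?j * (arr M j * (U j * W j))"
        by (rule assoc_mult_mat[OF Z[OF nxt_less[OF j]] arr_carrier[OF j] mult_carrier_mat[OF U[OF j] W[OF j]]])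
      have e2: "Z ?j * (arr M j * U j) * W j = Z ?j * ((arr M j * U j) * W j)"
        by (rule assoc_mult_mat[OF Z[OF nxt_less[OF j]] mult_carrier_mat[OF arr_carrier[OF j] U[OF j]] W[OF j]])
      have e3: "(arr M j * U j) * W j = arr M j * (U j * W j)" by (rule assoc_mult_mat[OF arr_carrier[OF j] U[OF j] W[OF j]])
      show ?thesis using e1 e2 e3 by simp
    qed
    also have "\<dots> = (Z ?j * U ?j) * C j * W j" unfolding AU[OF j]
      using assoc_mult_mat[OF Z[OF nxt_less[OF j]] U[OF nxt_less[OF j]] C[OF j]] by simp
    also have "\<dots> = 0\<^sub>m (s ?j) (dimv M j)" unfolding ZU[OF nxt_less[OF j]] using C[OF j] W[OF j] by simp
    finally show ?thesis using ZA right_mult_one_mat[OF ZA] by (simp add: mat_minus_zero)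
  qed
  show ?thesis unfolding L R DZ WA[OF j, symmetric]
    using W[OF j] Z[OF j] C[OF j] compl_arr_carrier[OF j] W[OF nxt_less[OF j]] Z[OF nxt_less[OF j]] arr_carrier[OF j] by simp
qed

lemma arr_from_dsum:
  assumes j: "j < n"
  shows "arr M j * from_dsum j = from_dsum (nxt n j) * dsum_arr j"
proof -
  let ?j = "nxt n j"
  have L: "arr M j * from_dsum j = four_block_mat (arr M j * U j) (arr M j * V j) (0\<^sub>m 0 (c j)) (0\<^sub>m 0 (s j))"
    unfolding from_dsum_def by (rule mult_four_block_mat_row[OF arr_carrier[OF j] U[OF j] V[OF j]])
  have R: "from_dsum ?j * dsum_arr j = four_block_mat (U ?j * C j + V ?j * 0\<^sub>m (s ?j) (c j)) (U ?j * 0\<^sub>m (c ?j) (s j) + V ?j * compl_arr j)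
     (0\<^sub>m 0 (c ?j) * C j + 0\<^sub>m 0 (s ?j) * 0\<^sub>m (s ?j) (c j)) (0\<^sub>m 0 (c ?j) * 0\<^sub>m (c ?j) (s j) + 0\<^sub>m 0 (s ?j) * compl_arr j)"
    unfolding from_dsum_def dsum_arr_def by (rule mult_four_block_mat[OF U[OF nxt_less[OF j]] V[OF nxt_less[OF j]] zero_carrier_mat zero_carrier_mat
      C[OF j] zero_carrier_mat zero_carrier_mat compl_arr_carrier[OF j]])
  have VD: "V ?j * compl_arr j = arr M j * V j"
  proof -
    have AV: "arr M j * V j \<in> carrier_mat (dimv M ?j) (s j)" using arr_carrier[OF j] V[OF j] by simp
    have "V ?j * compl_arr j = (V ?j * Z ?j) * (arr M j * V j)" unfolding compl_arr_def
      using assoc_mult_mat[OF Z[OF nxt_less[OF j]] arr_carrier[OF j] V[OF j]] assoc_mult_mat[OF V[OF nxt_less[OF j]] Z[OF nxt_less[OF j]] AV] by simp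
    also have "\<dots> = 1\<^sub>m (dimv M ?j) * (arr M j * V j) - (U ?j * W ?j) * (arr M j * V j)"
      unfolding VZ[OF nxt_less[OF j]] by (rule minus_mult_distrib_mat[OF one_carrier_mat _ AV]) (use U[OF nxt_less[OF j]] W[OF nxt_less[OF j]] in simp)
    also have "(U ?j * W ?j) * (arr M j * V j) = U ?j * ((W ?j * arr M j) * V j)"
    proof -
      have e1: "(U ?j * W ?j) * (arr M j * V j) = U ?j * (W ?j * (arr M j * V j))"
        by (rule assoc_mult_mat[OF U[OF nxt_less[OF j]] W[OF nxt_less[OF j]] AV])
      have e2: "(W ?j * arr M j) * V j = W ?j * (arr M j * V j)"
        by (rule assoc_mult_mat[OF W[OF nxt_less[OF j]] arr_carrier[OF j] V[OF j]])
      show ?thesis using e1 e2 by simp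
    qed
    also have "\<dots> = U ?j * (C j * (W j * V j))" unfolding WA[OF j]
      using assoc_mult_mat[OF C[OF j] W[OF j] V[OF j]] by simp
    also have "\<dots> = 0\<^sub>m (dimv M ?j) (s j)" unfolding WV[OF j] using U[OF nxt_less[OF j]] C[OF j] by simp
    finally show ?thesis using AV left_mult_one_mat[OF AV] by (simp add: mat_minus_zero)
  qed
  show ?thesis unfolding L R VD AU[OF j]
    using U[OF j] V[OF j] C[OF j] compl_arr_carrier[OF j] U[OF nxt_less[OF j]] V[OF nxt_less[OF j]] arr_carrier[OF j] by simp
qed

lemma is_hom_to_dsum: "is_hom n M (dsum n (c, C) (s, compl_arr)) to_dsum"
  unfolding is_hom_def dsum_eq using to_dsum_carrier dsum_arr_to_dsum by auto

lemma is_hom_from_dsum: "is_hom n (dsum n (c, C) (s, compl_arr)) M from_dsum"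
  unfolding is_hom_def dsum_eq using from_dsum_carrier arr_from_dsum by auto

lemma is_rep_parts: "is_rep n l (c, C)" "is_rep n l (s, compl_arr)"
proof -
  have Q: "quiver_rep n (dsum n (c, C) (s, compl_arr))"
    unfolding quiver_rep_def dsum_eq using dsum_arr_def C compl_arr_carrier by auto
  have "pathmat n (dsum n (c, C) (s, compl_arr)) j (Suc l) = 0\<^sub>m (c ((j + Suc l) mod n) + s ((j + Suc l) mod n)) (c j + s j)"
    if j: "j < n" for j
  proof -
    let ?q = "(j + Suc l) mod n"
    have q: "?q < n" using n by simp
    have P: "pathmat n (dsum n (c, C) (s, compl_arr)) j (Suc l) \<in> carrier_mat (c ?q + s ?q) (c j + s j)"
      using quiver_rep_pathmat_carrier[OF Q j, of "Suc l"] unfolding dsum_eq by (simp del: pathmat.simps)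
    have "pathmat n (dsum n (c, C) (s, compl_arr)) j (Suc l) = to_dsum ?q * from_dsum ?q * pathmat n (dsum n (c, C) (s, compl_arr)) j (Suc l)"
      using to_dsum_from_dsum[OF q] P by (simp del: pathmat.simps)
    also have "\<dots> = to_dsum ?q * (pathmat n M j (Suc l) * from_dsum j)"
      using quiver_rep_hom_pathmat[OF Q is_rep_quiver_rep[OF rep] is_hom_from_dsum j, of "Suc l"]
        assoc_mult_mat[OF to_dsum_carrier[OF q] from_dsum_carrier[OF q] P] by (simp add: dsum_eq del: pathmat.simps)
    also have "pathmat n M j (Suc l) = 0\<^sub>m (dimv M ?q) (dimv M j)" using rep j unfolding is_rep_def by blast
    finally show ?thesis using to_dsum_carrier[OF q] from_dsum_carrier[OF j] by simp
  qed
  then have "paths_vanish n (dsum n (c, C) (s, compl_arr)) (Suc l)"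
    unfolding paths_vanish_def by (simp add: dsum_eq)
  then show "is_rep n l (c, C)" "is_rep n l (s, compl_arr)" using dsum_is_rep_parts quiver_rep_parts by blast+
qed

lemma rep_iso_dsum: "rep_iso n M (dsum n (c, C) (s, compl_arr))"
  unfolding rep_iso_def using is_hom_to_dsum is_hom_from_dsum to_dsum_from_dsum from_dsum_to_dsum by (auto simp: dsum_eq)

end

lemma (in split_embedding) complement_exists:
  obtains s V Z where "split_embedding_complement n l M c U W C s V Z"
proof -
  define P where "P j = (\<lambda>(s, V, Z). V \<in> carrier_mat (dimv M j) s \<and> Z \<in> carrier_mat s (dimv M j) \<and>
     W j * V = 0\<^sub>m (c j) s \<and> Z * U j = 0\<^sub>m s (c j) \<and> Z * V = 1\<^sub>m s \<and> V * Z = 1\<^sub>m (dimv M j) - U j * W j)" for j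
  have "\<exists>svz. j < n \<longrightarrow> P j svz" for j
  proof (cases "j < n")
    case True
    obtain s V Z where "V \<in> carrier_mat (dimv M j) s" "Z \<in> carrier_mat s (dimv M j)"
      "W j * V = 0\<^sub>m (c j) s" "Z * U j = 0\<^sub>m s (c j)" "Z * V = 1\<^sub>m s" "V * Z = 1\<^sub>m (dimv M j) - U j * W j"
      by (rule split_mono_complement[OF U[OF True] W[OF True] WU[OF True]])
    then have "P j (s, V, Z)" unfolding P_def by simp
    then show ?thesis by blast
  qed simp
  then obtain g where g: "\<And>j. j < n \<Longrightarrow> P j (g j)" by metis
  define s where "s j = fst (g j)" for j
  define V where "V j = fst (snd (g j))" for j
  define Z where "Z j = snd (snd (g j))" for j
  have svz: "P j (s j, V j, Z j)" if "j < n" for j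
    using g[OF that] unfolding s_def V_def Z_def by simp
  have "split_embedding_complement n l M c U W C s V Z"
    by unfold_locales (use svz in \<open>auto simp: P_def\<close>)
  then show thesis by (rule that)
qed

lemma (in split_embedding) decomposition:
  assumes nzX: "\<exists>j<n. 0 < c j" and ne: "\<exists>j<n. U j * W j \<noteq> 1\<^sub>m (dimv M j)"
  shows "\<exists>X Y. is_rep n l X \<and> is_rep n l Y \<and> nonzero_rep n X \<and> nonzero_rep n Y \<and> rep_iso n M (dsum n X Y)"
proof -
  obtain s V Z where "split_embedding_complement n l M c U W C s V Z" by (rule complement_exists)
  then interpret split_embedding_complement n l M c U W C s V Z .
  have "nonzero_rep n (s, compl_arr)"
  proof (rule ccontr)
    assume "\<not> nonzero_rep n (s, compl_arr)"
    then have s0: "\<And>j. j < n \<Longrightarrow> s j = 0" unfolding nonzero_rep_def by auto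
    obtain j where j: "j < n" "U j * W j \<noteq> 1\<^sub>m (dimv M j)" using ne by blast
    have "V j * Z j = 0\<^sub>m (dimv M j) (dimv M j)"
      using V[OF j(1)] Z[OF j(1)] s0[OF j(1)] by (intro eq_matI) (auto simp: scalar_prod_def)
    then have "U j * W j = 1\<^sub>m (dimv M j)"
      using UW_VZ[OF j(1)] U[OF j(1)] W[OF j(1)] by simp
    then show False using j(2) by simp
  qed
  moreover have "nonzero_rep n (c, C)" unfolding nonzero_rep_def using nzX by simp
  ultimately show ?thesis using is_rep_parts rep_iso_dsum by blast
qed

section \<open>Indecomposable modules are string modules\<close>

text \<open>\<open>M\<close> is the string module of length \<open>a\<close> generated by \<open>x\<close>: the orbit matrices are isomorphisms.\<close>
locale string_presentation = split_cyclic_vector n l M i x a q t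
  for n l and M :: "'k::field rep" and i x a q t +
  assumes full: "\<And>j. j < n \<Longrightarrow> orbit_mat n M i x a j * retract_mat n M i q a j = 1\<^sub>m (dimv M j)"

lemma indecomposable_string_presentation:
  fixes M :: "'k::field rep"
  assumes indec: "indecomposable n l M" and n: "1 \<le> n"
  obtains i x t q where "string_presentation n l M i x (Suc t) q t"
proof -
  have rep: "is_rep n l M" and nz: "nonzero_rep n M" using indec unfolding indecomposable_def by auto
  obtain t i x where i: "i < n" and x: "x \<in> carrier_vec (dimv M i)"
    and nzx: "pathmat n M i t *\<^sub>v x \<noteq> 0\<^sub>v (dimv M ((i+t) mod n))" and vanish: "paths_vanish n M (Suc t)"
    using longest_nonzero_path[OF rep n nz] by blast
  obtain q where q: "q \<in> carrier_vec (dimv M ((i+t) mod n))" "q \<bullet> (pathmat n M i t *\<^sub>v x) = 1"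
    "\<And>s. 1 \<le> s \<Longrightarrow> s * n \<le> t \<Longrightarrow> q \<bullet> (pathmat n M i (t - s*n) *\<^sub>v x) = 0"
    using separating_functional[OF rep n i x nzx vanish] by blast
  have x_killed: "pathmat n M i (Suc t) *\<^sub>v x = 0\<^sub>v (dimv M ((i + Suc t) mod n))"
    by (rule paths_vanish_mult_vec[OF rep n i x vanish]) simp
  interpret split_cyclic_vector n l M i x "Suc t" q t
    by unfold_locales (use rep i x x_killed q vanish in auto)
  interpret split_embedding n l M "string_dim n i (Suc t)" "orbit_mat n M i x (Suc t)"
      "retract_mat n M i q (Suc t)" "string_arr n i (Suc t)"
    by unfold_locales (use rep n orbit_mat_carrier retract_mat_carrier retract_orbit_mat arr_orbit_mat retract_mat_arr in auto)
  have nzX: "\<exists>j<n. 0 < string_dim n i (Suc t) j" using string_dim_pos_self[OF n i] i by auto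
  have "orbit_mat n M i x (Suc t) j * retract_mat n M i q (Suc t) j = 1\<^sub>m (dimv M j)" if "j < n" for j
    using decomposition[OF nzX] indec that unfolding indecomposable_def by blast
  then have "string_presentation n l M i x (Suc t) q t"
    by unfold_locales blast
  then show thesis by (rule that)
qed

lemma is_hom_comp:
  assumes A: "quiver_rep n A" and B: "quiver_rep n B" and C: "quiver_rep n C"
    and f: "is_hom n A B f" and g: "is_hom n B C g"
  shows "is_hom n A C (\<lambda>j. g j * f j)"
  unfolding is_hom_def
proof (intro conjI allI impI)
  fix j assume j: "j < n"
  have f: "f j \<in> carrier_mat (dimv B j) (dimv A j)" and g: "g j \<in> carrier_mat (dimv C j) (dimv B j)"
    using f g j unfolding is_hom_def by auto
  then show "g j * f j \<in> carrier_mat (dimv C j) (dimv A j)" by simp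
  have nj: "nxt n j < n" using nxt_lt j by simp
  have f': "f (nxt n j) \<in> carrier_mat (dimv B (nxt n j)) (dimv A (nxt n j))"
    and g': "g (nxt n j) \<in> carrier_mat (dimv C (nxt n j)) (dimv B (nxt n j))"
    using assms nj unfolding is_hom_def by auto
  have aA: "arr A j \<in> carrier_mat (dimv A (nxt n j)) (dimv A j)"
    and aB: "arr B j \<in> carrier_mat (dimv B (nxt n j)) (dimv B j)"
    and aC: "arr C j \<in> carrier_mat (dimv C (nxt n j)) (dimv C j)"
    using A B C j unfolding quiver_rep_def by auto
  have cf: "arr B j * f j = f (nxt n j) * arr A j" and cg: "arr C j * g j = g (nxt n j) * arr B j"
    using assms j unfolding is_hom_def by auto
  have "arr C j * (g j * f j) = (arr C j * g j) * f j" using assoc_mult_mat[OF aC g f] by simp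
  also have "\<dots> = g (nxt n j) * (arr B j * f j)" unfolding cg using assoc_mult_mat[OF g' aB f] by simp
  also have "\<dots> = (g (nxt n j) * f (nxt n j)) * arr A j" unfolding cf using assoc_mult_mat[OF g' f' aA] by simp
  finally show "arr C j * (g j * f j) = g (nxt n j) * f (nxt n j) * arr A j" .
qed

lemma (in cyclic_vector) is_hom_orbit_mat: "is_hom n (string_rep n i a) M (orbit_mat n M i x a)"
  unfolding is_hom_def string_rep_def using orbit_mat_carrier arr_orbit_mat by simp

lemma (in split_cyclic_vector) is_hom_retract_mat: "is_hom n M (string_rep n i a) (retract_mat n M i q a)"
  unfolding is_hom_def string_rep_def using retract_mat_carrier retract_mat_arr by simp

lemma string_arr_shift_mat:
  assumes n: "1 \<le> n" and i: "i < n" and j: "j < n" and ab: "a \<le> b"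
  shows "string_arr n i a j * shift_mat (string_dim n i a j) (string_dim n i b j) 0
    = (shift_mat (string_dim n i a (nxt n j)) (string_dim n i b (nxt n j)) 0 :: 'k::field mat) * string_arr n i b j"
proof -
  let ?d = "wraps n i j"
  have L: "string_arr n i a j * shift_mat (string_dim n i a j) (string_dim n i b j) 0 = (mat (string_dim n i a (nxt n j)) (string_dim n i b j)
     (\<lambda>(k1,k2). if k1 = k2 + 0 + ?d \<and> k2 + 0 < string_dim n i a j then 1 else 0) :: 'k mat)"
    unfolding string_arr_def by (rule shift_mat_mult)
  have R: "(shift_mat (string_dim n i a (nxt n j)) (string_dim n i b (nxt n j)) 0 :: 'k mat) * string_arr n i b j = mat (string_dim n i a (nxt n j)) (string_dim n i b j)
     (\<lambda>(k1,k2). if k1 = k2 + ?d + 0 \<and> k2 + ?d < string_dim n i b (nxt n j) then 1 else 0)"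
    unfolding string_arr_def by (rule shift_mat_mult)
  have eqv: "(k1 = k2 + ?d \<and> k2 < string_dim n i a j) \<longleftrightarrow> (k1 = k2 + ?d \<and> k2 + ?d < string_dim n i b (nxt n j))"
    if k1: "k1 < string_dim n i a (nxt n j)" for k1 k2
  proof (cases "k1 = k2 + ?d")
    case True
    have "path_len n i (nxt n j) k1 < a" using string_dim_iff[OF n] k1 by simp
    moreover have "path_len n i (nxt n j) k1 = path_len n i j k2 + 1" using path_len_shift[OF n i j, of k1 k2] True by simp
    ultimately have "path_len n i j k2 + 1 < a" by simp
    then have "k2 < string_dim n i a j" using string_dim_iff[OF n] by simp
    moreover have "k2 + ?d < string_dim n i b (nxt n j)" using True k1 string_dim_mono[OF n ab, of i "nxt n j"] by simp
    ultimately show ?thesis using True by simp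
  qed simp
  show ?thesis unfolding L R using eqv by (intro eq_matI) auto
qed

lemma is_hom_string_proj:
  assumes n: "1 \<le> n" and i: "i < n" and ab: "a \<le> b"
  shows "is_hom n (string_rep n i b) (string_rep n i a :: 'k::field rep)
    (\<lambda>j. shift_mat (string_dim n i a j) (string_dim n i b j) 0)"
  unfolding is_hom_def string_rep_def using string_arr_shift_mat[OF n i _ ab] by auto

lemma hom_orbit_mat:
  assumes "is_rep n l A" "is_rep n l B" "is_hom n A B f" "1 \<le> n" "i < n" "x \<in> carrier_vec (dimv A i)" "j < n"
  shows "f j * orbit_mat n A i x a j = orbit_mat n B i (f i *\<^sub>v x) a j"
proof (rule eq_matI)
  have fj: "f j \<in> carrier_mat (dimv B j) (dimv A j)" and fi: "f i \<in> carrier_mat (dimv B i) (dimv A i)"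
    using assms unfolding is_hom_def by auto
  fix r k assume rk: "r < dim_row (orbit_mat n B i (f i *\<^sub>v x) a j)" "k < dim_col (orbit_mat n B i (f i *\<^sub>v x) a j)"
  then have r: "r < dimv B j" and k: "k < string_dim n i a j" unfolding orbit_mat_def by auto
  let ?e = "path_len n i j k"
  have ej: "(i + ?e) mod n = j" using path_len_mod[OF assms(4,5,7)] .
  have PA: "pathmat n A i ?e \<in> carrier_mat (dimv A j) (dimv A i)" using pathmat_carrier[OF assms(1,4,5), of ?e] ej by simp
  have PB: "pathmat n B i ?e \<in> carrier_mat (dimv B j) (dimv B i)" using pathmat_carrier[OF assms(2,4,5), of ?e] ej by simp
  have hp: "f j * pathmat n A i ?e = pathmat n B i ?e * f i" using hom_pathmat[OF assms(1-5), of ?e] ej by simp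
  have "(f j * orbit_mat n A i x a j) $$ (r,k) = row (f j) r \<bullet> col (orbit_mat n A i x a j) k"
    using fj r k unfolding orbit_mat_def by simp
  also have "\<dots> = (f j *\<^sub>v (pathmat n A i ?e *\<^sub>v x)) $ r"
  proof -
    have "col (orbit_mat n A i x a j) k = vec (dimv A j) (\<lambda>r. (pathmat n A i ?e *\<^sub>v x) $ r)"
      unfolding orbit_mat_def using k by (simp add: col_mat)
    also have "\<dots> = pathmat n A i ?e *\<^sub>v x" using PA assms(6) by (intro vec_index_id) auto
    finally show ?thesis using fj r by simp
  qed
  also have "f j *\<^sub>v (pathmat n A i ?e *\<^sub>v x) = pathmat n B i ?e *\<^sub>v (f i *\<^sub>v x)"
    using hp fj PA fi PB assms(6) by (metis assoc_mult_mat_vec)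
  also have "(pathmat n B i ?e *\<^sub>v (f i *\<^sub>v x)) $ r = orbit_mat n B i (f i *\<^sub>v x) a j $$ (r,k)"
    unfolding orbit_mat_def using r k by simp
  finally show "(f j * orbit_mat n A i x a j) $$ (r,k) = orbit_mat n B i (f i *\<^sub>v x) a j $$ (r,k)" .
qed (use assms in \<open>auto simp: orbit_mat_def is_hom_def\<close>)

text \<open>The composite \<open>N \<rightarrow> string_rep n i b \<rightarrow> string_rep n i a \<rightarrow> M\<close>; for string presentations it maps
  generator to generator.\<close>
definition string_map ::
    "nat \<Rightarrow> 'k::field rep \<Rightarrow> nat \<Rightarrow> 'k vec \<Rightarrow> nat \<Rightarrow> 'k rep \<Rightarrow> 'k vec \<Rightarrow> nat \<Rightarrow> nat \<Rightarrow> 'k mat" where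
  "string_map n M i x a N q b j =
     orbit_mat n M i x a j * (shift_mat (string_dim n i a j) (string_dim n i b j) 0 * retract_mat n N i q b j)"

lemma string_map:
  fixes M N :: "'k::field rep"
  assumes src: "split_cyclic_vector n l N i y b q t" and tgt: "cyclic_vector n l M i x a"
    and ab: "a \<le> b" and a1: "1 \<le> a"
  shows "is_hom n N M (string_map n M i x a N q b)" and "string_map n M i x a N q b i *\<^sub>v y = x"
proof -
  interpret S: split_cyclic_vector n l N i y b q t by (rule src)
  interpret T: cyclic_vector n l M i x a by (rule tgt)
  have n: "1 \<le> n" and i: "i < n" using S.n S.i .
  let ?G = "\<lambda>j. shift_mat (string_dim n i a j) (string_dim n i b j) 0 :: 'k mat"
  have "is_hom n N (string_rep n i a) (\<lambda>j. ?G j * retract_mat n N i q b j)"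
    using is_hom_comp[OF is_rep_quiver_rep[OF S.rep] quiver_rep_string_rep quiver_rep_string_rep
      S.is_hom_retract_mat is_hom_string_proj[OF n i ab]] .
  from is_hom_comp[OF is_rep_quiver_rep[OF S.rep] quiver_rep_string_rep is_rep_quiver_rep[OF T.rep]
      this T.is_hom_orbit_mat]
  show "is_hom n N M (string_map n M i x a N q b)" unfolding string_map_def[abs_def] .
  have c0: "0 < string_dim n i a i" using string_dim_pos_self[OF n i a1] .
  have cab: "string_dim n i a i \<le> string_dim n i b i" using string_dim_mono[OF n ab] .
  have "retract_mat n N i q b i *\<^sub>v y = unit_vec (string_dim n i b i) 0" by (rule S.retract_mat_generator)
  moreover have "?G i *\<^sub>v unit_vec (string_dim n i b i) 0 = unit_vec (string_dim n i a i) 0"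
    unfolding shift_mat_mult_vec[OF unit_vec_carrier] using cab c0 by (intro eq_vecI) auto
  moreover have "orbit_mat n M i x a i *\<^sub>v unit_vec (string_dim n i a i) 0 = x"
    using mult_mat_vec_unit[OF T.orbit_mat_carrier[OF i] c0] T.orbit_mat_col[OF i c0] path_len_self[OF n i, of 0] T.x
    by simp
  moreover have "string_map n M i x a N q b i *\<^sub>v y
      = orbit_mat n M i x a i *\<^sub>v (?G i *\<^sub>v (retract_mat n N i q b i *\<^sub>v y))"
    unfolding string_map_def
    using assoc_mult_mat_vec[OF T.orbit_mat_carrier[OF i] mult_carrier_mat[OF shift_mat_carrier S.retract_mat_carrier[OF i]] S.x]
      assoc_mult_mat_vec[OF shift_mat_carrier S.retract_mat_carrier[OF i] S.x] by simp
  ultimately show "string_map n M i x a N q b i *\<^sub>v y = x" by simp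
qed

section \<open>Projectivity and factorisation through projectives\<close>

lemma (in string_presentation) length_le: "t \<le> l"
proof (rule ccontr)
  assume "\<not> t \<le> l"
  then have "pathmat n M i t = 0\<^sub>m (dimv M ((i + t) mod n)) (dimv M i)"
    using pathmat_zero[OF rep n i, of t] by simp
  then show False using q1 q x by simp
qed

lemma (in string_presentation) is_projective_of_full_length:
  assumes "t = l"
  shows "is_projective n l M"
  unfolding is_projective_def
proof (intro conjI allI impI)
  show "is_rep n l M" by (rule rep)
  fix X Y :: "'k rep" and g h
  assume "is_rep n l X \<and> is_rep n l Y \<and> is_surj_hom n X Y g \<and> is_hom n M Y h"
  then have rX: "is_rep n l X" and rY: "is_rep n l Y" and g: "is_hom n X Y g" and h: "is_hom n M Y h"
    and surj: "\<And>j v. j < n \<Longrightarrow> v \<in> carrier_vec (dimv Y j) \<Longrightarrow> \<exists>w\<in>carrier_vec (dimv X j). g j *\<^sub>v w = v"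
    unfolding is_surj_hom_def by auto
  have "h i *\<^sub>v x \<in> carrier_vec (dimv Y i)" using h i x unfolding is_hom_def by auto
  then obtain w where w: "w \<in> carrier_vec (dimv X i)" "g i *\<^sub>v w = h i *\<^sub>v x" using surj[OF i] by blast
  interpret X: cyclic_vector n l X i w a
    by unfold_locales (use rX i w pathmat_zero[OF rX n i, of a] assms at in auto)
  define h' where "h' j = orbit_mat n X i w a j * retract_mat n M i q a j" for j
  have "is_hom n M X h'"
    unfolding h'_def using is_hom_comp[OF is_rep_quiver_rep[OF rep] quiver_rep_string_rep
      is_rep_quiver_rep[OF rX] is_hom_retract_mat X.is_hom_orbit_mat] .
  moreover have "g j * h' j = h j" if j: "j < n" for j
  proof -
    have gj: "g j \<in> carrier_mat (dimv Y j) (dimv X j)" using g j unfolding is_hom_def by auto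
    have hj: "h j \<in> carrier_mat (dimv Y j) (dimv M j)" using h j unfolding is_hom_def by auto
    have "g j * h' j = (g j * orbit_mat n X i w a j) * retract_mat n M i q a j"
      unfolding h'_def using assoc_mult_mat[OF gj X.orbit_mat_carrier[OF j] retract_mat_carrier[OF j]] by simp
    also have "g j * orbit_mat n X i w a j = h j * orbit_mat n M i x a j"
      using hom_orbit_mat[OF rX rY g n i w(1) j] hom_orbit_mat[OF rep rY h n i x j] w(2) by simp
    also have "h j * orbit_mat n M i x a j * retract_mat n M i q a j = h j"
      using assoc_mult_mat[OF hj orbit_mat_carrier[OF j] retract_mat_carrier[OF j]] full[OF j] hj by simp
    finally show ?thesis .
  qed
  ultimately show "\<exists>h'. is_hom n M X h' \<and> (\<forall>i<n. g i * h' i = h i)" by blast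
qed

lemma factors_through_projective_lift:
  assumes fp: "factors_through_projective n l S T f" and rS: "is_rep n l S" and rF: "is_rep n l F"
    and rT: "is_rep n l T" and g: "is_surj_hom n F T g"
  obtains u where "is_hom n S F u" "\<And>j. j < n \<Longrightarrow> g j * u j = f j"
proof -
  obtain P a b where P: "is_projective n l P" and a: "is_hom n S P a" and b: "is_hom n P T b"
    and fab: "\<And>j. j < n \<Longrightarrow> f j = b j * a j"
    using fp unfolding factors_through_projective_def by blast
  have rP: "is_rep n l P" using P unfolding is_projective_def by blast
  obtain h where h: "is_hom n P F h" and gh: "\<And>j. j < n \<Longrightarrow> g j * h j = b j"
    using P rF rT g b unfolding is_projective_def by blast
  have "is_hom n S F (\<lambda>j. h j * a j)"
    by (rule is_hom_comp[OF is_rep_quiver_rep[OF rS] is_rep_quiver_rep[OF rP] is_rep_quiver_rep[OF rF] a h])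
  moreover have "g j * (h j * a j) = f j" if j: "j < n" for j
  proof -
    have "g j \<in> carrier_mat (dimv T j) (dimv F j)" "h j \<in> carrier_mat (dimv F j) (dimv P j)"
      "a j \<in> carrier_mat (dimv P j) (dimv S j)" using g h a j unfolding is_surj_hom_def is_hom_def by auto
    then show ?thesis using fab[OF j] gh[OF j] assoc_mult_mat by metis
  qed
  ultimately show thesis using that by blast
qed

lemma (in string_presentation) surj_hom_from_longer_string:
  assumes aL: "a \<le> L"
  shows "is_surj_hom n (string_rep n i L) M (\<lambda>j. orbit_mat n M i x a j * shift_mat (string_dim n i a j) (string_dim n i L j) 0)"
  unfolding is_surj_hom_def
proof (intro conjI allI impI ballI)
  show "is_hom n (string_rep n i L) M (\<lambda>j. orbit_mat n M i x a j * shift_mat (string_dim n i a j) (string_dim n i L j) 0)"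
    using is_hom_comp[OF quiver_rep_string_rep quiver_rep_string_rep is_rep_quiver_rep[OF rep]
      is_hom_string_proj[OF n i aL] is_hom_orbit_mat] .
  fix j and v :: "'k vec" assume j: "j < n" and v: "v \<in> carrier_vec (dimv M j)"
  let ?G = "shift_mat (string_dim n i a j) (string_dim n i L j) 0 :: 'k mat"
  let ?E = "shift_mat (string_dim n i L j) (string_dim n i a j) 0 :: 'k mat"
  have Wv: "retract_mat n M i q a j *\<^sub>v v \<in> carrier_vec (string_dim n i a j)" using retract_mat_carrier[OF j] v by simp
  have GE: "?G * ?E = 1\<^sub>m (string_dim n i a j)"
    unfolding shift_mat_mult using string_dim_mono[OF n aL, of i j] by (intro eq_matI) auto
  have EWv: "?E *\<^sub>v (retract_mat n M i q a j *\<^sub>v v) \<in> carrier_vec (string_dim n i L j)"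
    by (rule mult_mat_vec_carrier[OF shift_mat_carrier Wv])
  have "(orbit_mat n M i x a j * ?G) *\<^sub>v (?E *\<^sub>v (retract_mat n M i q a j *\<^sub>v v))
      = orbit_mat n M i x a j *\<^sub>v ((?G * ?E) *\<^sub>v (retract_mat n M i q a j *\<^sub>v v))"
    using assoc_mult_mat_vec[OF orbit_mat_carrier[OF j] shift_mat_carrier EWv]
      assoc_mult_mat_vec[OF shift_mat_carrier shift_mat_carrier Wv] by simp
  also have "\<dots> = (orbit_mat n M i x a j * retract_mat n M i q a j) *\<^sub>v v"
    unfolding GE using Wv orbit_mat_carrier[OF j] retract_mat_carrier[OF j] v by (simp add: assoc_mult_mat_vec)
  also have "\<dots> = v" unfolding full[OF j] using v by simp
  finally show "\<exists>w\<in>carrier_vec (dimv (string_rep n i L) j).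
      (orbit_mat n M i x a j * ?G) *\<^sub>v w = v"
    using EWv unfolding string_rep_def by (intro bexI[of _ "?E *\<^sub>v (retract_mat n M i q a j *\<^sub>v v)"]) auto
qed

lemma string_rep_annihilated_coord:
  assumes n: "1 \<le> n" and i: "i < n" and j: "j < n"
    and z: "z \<in> carrier_vec (string_dim n i L j)"
    and zd: "pathmat n (string_rep n i L :: 'k::field rep) j d *\<^sub>v z = 0\<^sub>v (string_dim n i L ((j + d) mod n))"
    and ek: "path_len n i j k = e" and edL: "e + d < L"
  shows "z $ k = 0"
proof -
  let ?q = "(j + d) mod n"
  have q: "?q < n" using n by simp
  define k1 where "k1 = (e + d) div n"
  have "(i + (e + d)) mod n = ?q" using path_len_mod[OF n i j, of k] ek by (metis add.assoc mod_add_left_eq)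
  then have ek1: "path_len n i ?q k1 = e + d" unfolding k1_def using path_len_cong[OF n i q] by simp
  have k1L: "k1 < string_dim n i L ?q" using string_dim_iff[OF n] ek1 edL by simp
  have kL: "k < string_dim n i L j" using string_dim_iff[OF n] ek edL by simp
  have "(pathmat n (string_rep n i L :: 'k rep) j d *\<^sub>v z) $ k1
      = (\<Sum>k2\<in>{0..<string_dim n i L j}. (if path_len n i ?q k1 = path_len n i j k2 + d then 1 else 0) * z $ k2)"
    unfolding pathmat_string_rep[OF n i j] using k1L z by (simp add: scalar_prod_def)
  also have "\<dots> = (\<Sum>k2\<in>{0..<string_dim n i L j}. if k2 = k then z $ k2 else 0)"
    by (rule sum.cong) (auto simp: ek1 ek[symmetric] path_len_inj[OF n])
  also have "\<dots> = z $ k" using kL by (simp add: sum.delta')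
  finally show ?thesis using zd k1L by simp
qed

lemma (in string_presentation) orbit_shift_coord:
  assumes j: "j < n" and aL: "a \<le> L" and z: "z \<in> carrier_vec (string_dim n i L j)"
    and k: "k < string_dim n i a j"
    and eq: "(orbit_mat n M i x a j * shift_mat (string_dim n i a j) (string_dim n i L j) 0) *\<^sub>v z
      = col (orbit_mat n M i x a j) k"
  shows "z $ k = 1"
proof -
  let ?G = "shift_mat (string_dim n i a j) (string_dim n i L j) 0 :: 'k mat"
  have Gz: "?G *\<^sub>v z \<in> carrier_vec (string_dim n i a j)" by (rule mult_mat_vec_carrier[OF shift_mat_carrier z])
  have "orbit_mat n M i x a j *\<^sub>v (?G *\<^sub>v z) = col (orbit_mat n M i x a j) k"
    using eq assoc_mult_mat_vec[OF orbit_mat_carrier[OF j] shift_mat_carrier z] by simp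
  then have "(retract_mat n M i q a j * orbit_mat n M i x a j) *\<^sub>v (?G *\<^sub>v z)
      = col (retract_mat n M i q a j * orbit_mat n M i x a j) k"
    using assoc_mult_mat_vec[OF retract_mat_carrier[OF j] orbit_mat_carrier[OF j] Gz]
      col_mult2[OF retract_mat_carrier[OF j] orbit_mat_carrier[OF j] k] by simp
  then have "?G *\<^sub>v z = unit_vec (string_dim n i a j) k"
    unfolding retract_orbit_mat[OF j] using Gz k by simp
  moreover have "(?G *\<^sub>v z) $ k = z $ k"
    unfolding shift_mat_mult_vec[OF z] using k string_dim_mono[OF n aL, of i j] by simp
  ultimately show ?thesis using k by simp
qed

text \<open>A morphism into a string module that factors through a projective lifts to the projective
  cover, a string module of length \<open>l + 1\<close>; there a vector killed by the paths of length \<open>d\<close> has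
  no component along the basis vectors of depth \<open>e\<close> with \<open>e + d \<le> l\<close>.\<close>
lemma (in string_presentation) factors_through_projective_obstruction:
  assumes rS: "is_rep n l S" and fp: "factors_through_projective n l S M f"
    and j: "j < n" and s: "s \<in> carrier_vec (dimv S j)" and sd: "pathmat n S j d *\<^sub>v s = 0\<^sub>v (dimv S ((j+d) mod n))"
    and fs: "f j *\<^sub>v s = pathmat n M i e *\<^sub>v x" and ej: "(i + e) mod n = j" and ea: "e < a" and ed: "e + d \<le> l"
  shows False
proof -
  define L where "L = Suc l"
  define F where "F = (string_rep n i L :: 'k rep)"
  let ?G = "\<lambda>j. shift_mat (string_dim n i a j) (string_dim n i L j) 0 :: 'k mat"
  let ?g = "\<lambda>j. orbit_mat n M i x a j * ?G j"
  have rF: "is_rep n l F" unfolding F_def L_def by (rule is_rep_string_rep[OF n i])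
  have aL: "a \<le> L" unfolding L_def using length_le at by simp
  obtain u where u: "is_hom n S F u" and gu: "\<And>j. j < n \<Longrightarrow> ?g j * u j = f j"
    using factors_through_projective_lift[OF fp rS rF rep surj_hom_from_longer_string[OF aL, folded F_def]] by blast
  define z where "z = u j *\<^sub>v s"
  have uj: "u j \<in> carrier_mat (string_dim n i L j) (dimv S j)" using u j unfolding is_hom_def F_def string_rep_def by auto
  have z: "z \<in> carrier_vec (string_dim n i L j)" unfolding z_def using uj s by simp
  let ?q = "(j + d) mod n"
  have q: "?q < n" using n by simp
  have uq: "u ?q \<in> carrier_mat (string_dim n i L ?q) (dimv S ?q)" using u q unfolding is_hom_def F_def string_rep_def by auto
  have PF: "pathmat n F j d \<in> carrier_mat (string_dim n i L ?q) (string_dim n i L j)"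
    using pathmat_carrier[OF rF n j, of d] unfolding F_def string_rep_def by simp
  have "pathmat n F j d *\<^sub>v z = (pathmat n F j d * u j) *\<^sub>v s"
    unfolding z_def using assoc_mult_mat_vec[OF PF uj s] by simp
  also have "pathmat n F j d * u j = u ?q * pathmat n S j d" using hom_pathmat[OF rS rF u n j, of d] by simp
  also have "(u ?q * pathmat n S j d) *\<^sub>v s = 0\<^sub>v (string_dim n i L ?q)"
    using uq pathmat_carrier[OF rS n j, of d] s sd by (simp add: assoc_mult_mat_vec)
  finally have zd: "pathmat n F j d *\<^sub>v z = 0\<^sub>v (string_dim n i L ?q)" .
  define k where "k = e div n"
  have ek: "path_len n i j k = e" unfolding k_def using path_len_cong[OF n i j ej] by simp
  have ka: "k < string_dim n i a j" using string_dim_iff[OF n] ek ea by simp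
  have "z $ k = 0"
    using string_rep_annihilated_coord[OF n i j z zd[unfolded F_def] ek] ed unfolding L_def by simp
  have "?g j *\<^sub>v z = f j *\<^sub>v s"
    unfolding z_def gu[OF j, symmetric]
    using assoc_mult_mat_vec[OF mult_carrier_mat[OF orbit_mat_carrier[OF j] shift_mat_carrier] uj s] by simp
  then have "z $ k = 1"
    using orbit_shift_coord[OF j aL z ka] fs orbit_mat_col[OF j ka] ek by simp
  with \<open>z $ k = 0\<close> show False by simp
qed

section \<open>Top and socle of a string module\<close>

lemma dimv_top_rep: "fst (top_rep n M) j = dimv M j - vec_space.rank (dimv M j) (arr M (prv n j))"
  unfolding top_rep_def Let_def by simp
lemma dimv_soc_rep: "fst (soc_rep n M) j = dimv M j - vec_space.rank (dimv M (nxt n j)) (arr M j)"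
  unfolding soc_rep_def Let_def by simp

lemma prv_lt: "1 \<le> n \<Longrightarrow> prv n j < n" unfolding prv_def by simp
lemma nxt_prv: assumes "1 \<le> n" "j < n" shows "nxt n (prv n j) = j"
proof -
  have "nxt n (prv n j) = Suc ((j + n - 1) mod n) mod n" unfolding nxt_def prv_def by simp
  also have "\<dots> = Suc (j + n - 1) mod n" by (simp add: mod_Suc_eq)
  also have "Suc (j + n - 1) = j + n" using assms by simp
  finally show ?thesis using assms by simp
qed

lemma rep_iso_dimv:
  assumes "rep_iso n A B" "j < n"
  shows "dimv A j = dimv B j"
proof -
  obtain f g where "is_hom n A B f" "is_hom n B A g" "\<forall>i<n. g i * f i = 1\<^sub>m (dimv A i) \<and> f i * g i = 1\<^sub>m (dimv B i)"
    using assms(1) unfolding rep_iso_def by blast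
  then show ?thesis using invertible_mat_dims_eq[of "f j" "dimv B j" "dimv A j" "g j"] assms(2) unfolding is_hom_def by auto
qed

context string_presentation
begin

lemma arr_prv_surj:
  assumes j: "j < n" "j \<noteq> i" and z: "z \<in> carrier_vec (dimv M j)"
  shows "\<exists>w \<in> carrier_vec (dimv M (prv n j)). arr M (prv n j) *\<^sub>v w = z"
proof -
  let ?p = "prv n j"
  have p: "?p < n" using prv_lt n by simp
  have np: "nxt n ?p = j" using nxt_prv n j by simp
  have A: "arr M ?p \<in> carrier_mat (dimv M j) (dimv M ?p)" using is_rep_arr_carrier[OF rep p] np by simp
  have dl0: "wraps n i ?p = 0" unfolding wraps_def using np j by simp
  define y where "y = retract_mat n M i q a j *\<^sub>v z"
  have yc: "y \<in> carrier_vec (string_dim n i a j)" unfolding y_def using retract_mat_carrier[OF j(1)] z by simp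
  define y' where "y' = vec (string_dim n i a ?p) (\<lambda>k. if k < string_dim n i a j then y $ k else 0)"
  have y'c: "y' \<in> carrier_vec (string_dim n i a ?p)" unfolding y'_def by simp
  have sub: "k < string_dim n i a ?p" if "k < string_dim n i a j" for k
  proof -
    have "path_len n i j k < a" using string_dim_iff[OF n] that by simp
    moreover have "path_len n i j k = path_len n i ?p k + 1" using path_len_shift[OF n i p, of k k] dl0 np by simp
    ultimately show ?thesis using string_dim_iff[OF n] by simp
  qed
  have Cy: "string_arr n i a ?p *\<^sub>v y' = y"
    unfolding string_arr_def dl0 np shift_mat_mult_vec[OF y'c] using yc sub unfolding y'_def by (intro eq_vecI) auto
  define w where "w = orbit_mat n M i x a ?p *\<^sub>v y'"
  have wc: "w \<in> carrier_vec (dimv M ?p)" unfolding w_def using orbit_mat_carrier[OF p] y'c by simp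
  have "arr M ?p *\<^sub>v w = (arr M ?p * orbit_mat n M i x a ?p) *\<^sub>v y'" unfolding w_def
    using A orbit_mat_carrier[OF p] y'c by (simp add: assoc_mult_mat_vec)
  also have "\<dots> = (orbit_mat n M i x a j * string_arr n i a ?p) *\<^sub>v y'" using arr_orbit_mat[OF p] np by simp
  also have "\<dots> = orbit_mat n M i x a j *\<^sub>v y"
  proof -
    have Cp: "string_arr n i a ?p \<in> carrier_mat (string_dim n i a j) (string_dim n i a ?p)" using string_arr_carrier[of n i a ?p] np by simp
    show ?thesis using assoc_mult_mat_vec[OF orbit_mat_carrier[OF j(1)] Cp y'c] Cy by simp
  qed
  also have "\<dots> = (orbit_mat n M i x a j * retract_mat n M i q a j) *\<^sub>v z" unfolding y_def
    using orbit_mat_carrier[OF j(1)] retract_mat_carrier[OF j(1)] z by (simp add: assoc_mult_mat_vec)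
  also have "\<dots> = z" unfolding full[OF j(1)] using z by simp
  finally show ?thesis using wc by blast
qed

lemma dimv_top_rep_other:
  assumes j: "j < n" "j \<noteq> i"
  shows "fst (top_rep n M) j = 0"
proof -
  have p: "prv n j < n" using prv_lt n by simp
  have A: "arr M (prv n j) \<in> carrier_mat (dimv M j) (dimv M (prv n j))"
    using is_rep_arr_carrier[OF rep p] nxt_prv n j by simp
  have "vec_space.rank (dimv M j) (arr M (prv n j)) = dimv M j"
    using vec_space.rank_eq_nrows_iff_surj[OF A] arr_prv_surj[OF j] by blast
  then show ?thesis unfolding dimv_top_rep by simp
qed

lemma generator_path_nonzero: "pathmat n M i t *\<^sub>v x \<noteq> 0\<^sub>v (dimv M ((i+t) mod n))"
  using q1 q by auto

lemma dimv_top_rep_top: "0 < fst (top_rep n M) i"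
proof -
  let ?p = "prv n i"
  have p: "?p < n" using prv_lt n by simp
  have np: "nxt n ?p = i" using nxt_prv n i by simp
  have A: "arr M ?p \<in> carrier_mat (dimv M i) (dimv M ?p)" using is_rep_arr_carrier[OF rep p] np by simp
  have "\<not> dimv M i \<le> vec_space.rank (dimv M i) (arr M ?p)"
  proof
    assume "dimv M i \<le> vec_space.rank (dimv M i) (arr M ?p)"
    then have "vec_space.rank (dimv M i) (arr M ?p) = dimv M i" using vec_space.rank_le_nrows[OF A] by simp
    then obtain w where w: "w \<in> carrier_vec (dimv M ?p)" "arr M ?p *\<^sub>v w = x"
      using vec_space.rank_eq_nrows_iff_surj[OF A] x by blast
    have idx: "(?p + 1) mod n = i" using np unfolding nxt_def by simp
    have "pathmat n M ?p (1 + t) *\<^sub>v w = pathmat n M i t *\<^sub>v (pathmat n M ?p 1 *\<^sub>v w)"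
      using pathmat_mult_vec_comp[OF rep n p w(1) idx[symmetric], of t] by (simp add: add.commute)
    also have "pathmat n M ?p 1 *\<^sub>v w = x" using pathmat_one[OF rep n p] w by simp
    finally have "pathmat n M ?p (Suc t) *\<^sub>v w = pathmat n M i t *\<^sub>v x" by simp
    moreover have "pathmat n M ?p (Suc t) *\<^sub>v w = 0\<^sub>v (dimv M ((?p + Suc t) mod n))"
      using paths_vanish_mult_vec[OF rep n p w(1) paths_vanish_a, of "Suc t"] at by simp
    moreover have "(?p + Suc t) mod n = (i + t) mod n"
    proof -
      have "(?p + Suc t) mod n = ((?p + 1) mod n + t) mod n" by (simp add: mod_add_left_eq)
      then show ?thesis using idx by simp
    qed
    ultimately show False using generator_path_nonzero by simp
  qed
  then show ?thesis unfolding dimv_top_rep by simp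
qed

lemma arr_inj_off_socle:
  assumes j: "j < n" "j \<noteq> (i + t) mod n" and z: "z \<in> carrier_vec (dimv M j)"
    and Az: "arr M j *\<^sub>v z = 0\<^sub>v (dimv M (nxt n j))"
  shows "z = 0\<^sub>v (dimv M j)"
proof -
  have nj: "nxt n j < n" using nxt_lt n by simp
  have A: "arr M j \<in> carrier_mat (dimv M (nxt n j)) (dimv M j)" using is_rep_arr_carrier[OF rep j(1)] .
  define y where "y = retract_mat n M i q a j *\<^sub>v z"
  have yc: "y \<in> carrier_vec (string_dim n i a j)" unfolding y_def using retract_mat_carrier[OF j(1)] z by simp
  have zU: "z = orbit_mat n M i x a j *\<^sub>v y" unfolding y_def
    using orbit_mat_carrier[OF j(1)] retract_mat_carrier[OF j(1)] z full[OF j(1)] by (simp add: assoc_mult_mat_vec[symmetric])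
  have Cy: "string_arr n i a j *\<^sub>v y \<in> carrier_vec (string_dim n i a (nxt n j))" by (rule mult_mat_vec_carrier[OF string_arr_carrier yc])
  have "orbit_mat n M i x a (nxt n j) *\<^sub>v (string_arr n i a j *\<^sub>v y) = 0\<^sub>v (dimv M (nxt n j))"
  proof -
    have "orbit_mat n M i x a (nxt n j) *\<^sub>v (string_arr n i a j *\<^sub>v y) = (arr M j * orbit_mat n M i x a j) *\<^sub>v y"
      unfolding arr_orbit_mat[OF j(1)] using assoc_mult_mat_vec[OF orbit_mat_carrier[OF nj] string_arr_carrier yc] by simp
    also have "\<dots> = arr M j *\<^sub>v z" unfolding zU using A orbit_mat_carrier[OF j(1)] yc by (simp add: assoc_mult_mat_vec)
    finally show ?thesis using Az by simp
  qed
  then have "(retract_mat n M i q a (nxt n j) * orbit_mat n M i x a (nxt n j)) *\<^sub>v (string_arr n i a j *\<^sub>v y) = 0\<^sub>v (string_dim n i a (nxt n j))"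
    using retract_mat_carrier[OF nj] orbit_mat_carrier[OF nj] Cy by (simp add: assoc_mult_mat_vec)
  then have C0: "string_arr n i a j *\<^sub>v y = 0\<^sub>v (string_dim n i a (nxt n j))" unfolding retract_orbit_mat[OF nj] using Cy by simp
  have yk: "y $ k = 0" if k: "k < string_dim n i a j" for k
  proof -
    have "path_len n i j k \<noteq> t"
    proof
      assume "path_len n i j k = t"
      then have "(i + t) mod n = j" using path_len_mod[OF n i j(1)] by metis
      then show False using j by simp
    qed
    then have "path_len n i j k + 1 < a" using string_dim_iff[OF n] k at by simp
    then have kd: "k + wraps n i j < string_dim n i a (nxt n j)" using string_dim_nxt[OF n i j(1)] by simp
    have "(string_arr n i a j *\<^sub>v y) $ (k + wraps n i j) = y $ k"
      unfolding string_arr_def shift_mat_mult_vec[OF yc] using kd k by simp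
    then show "y $ k = 0" using C0 kd k by simp
  qed
  have "y = 0\<^sub>v (string_dim n i a j)" using yc yk by (intro eq_vecI) auto
  then show ?thesis using zU orbit_mat_carrier[OF j(1)] by simp
qed

lemma dimv_soc_rep_other:
  assumes j: "j < n" "j \<noteq> (i + t) mod n"
  shows "fst (soc_rep n M) j = 0"
proof -
  have A: "arr M j \<in> carrier_mat (dimv M (nxt n j)) (dimv M j)" using is_rep_arr_carrier[OF rep j(1)] .
  have "vec_space.rank (dimv M (nxt n j)) (arr M j) = dimv M j"
    using vec_space.rank_eq_ncols_iff_inj[OF A] arr_inj_off_socle[OF j] by blast
  then show ?thesis unfolding dimv_soc_rep by simp
qed

lemma dimv_soc_rep_socle: "0 < fst (soc_rep n M) ((i + t) mod n)"
proof -
  let ?v = "(i + t) mod n"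
  have v: "?v < n" using n by simp
  have A: "arr M ?v \<in> carrier_mat (dimv M (nxt n ?v)) (dimv M ?v)" using is_rep_arr_carrier[OF rep v] .
  have wc: "pathmat n M i t *\<^sub>v x \<in> carrier_vec (dimv M ?v)" using pathmat_mult_vec_carrier[OF rep n i x] by simp
  have "arr M ?v *\<^sub>v (pathmat n M i t *\<^sub>v x) = pathmat n M i (Suc t) *\<^sub>v x" by (rule arr_pathmat_mult_vec[OF rep n i x]) simp
  also have "\<dots> = 0\<^sub>v (dimv M (nxt n ?v))" using x_killed at nxt_mod[of n i t] by simp
  finally have "vec_space.rank (dimv M (nxt n ?v)) (arr M ?v) \<noteq> dimv M ?v"
    using vec_space.rank_eq_ncols_iff_inj[OF A] wc generator_path_nonzero by blast
  moreover have "vec_space.rank (dimv M (nxt n ?v)) (arr M ?v) \<le> dimv M ?v"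
    using vec_space.rank_le_nc[OF A] .
  ultimately show ?thesis unfolding dimv_soc_rep by simp
qed

end

lemma top_rep_iso_same_top:
  assumes cM: "string_presentation n l M iM x (Suc a) qM a" and cN: "string_presentation n l N iN y (Suc b) qN b"
    and iso: "rep_iso n (top_rep n M) (top_rep n N)"
  shows "iM = iN"
proof (rule ccontr)
  interpret M: string_presentation n l M iM x "Suc a" qM a by (rule cM)
  interpret N: string_presentation n l N iN y "Suc b" qN b by (rule cN)
  assume "iM \<noteq> iN"
  then have "fst (top_rep n N) iM = 0" using N.dimv_top_rep_other[OF M.i] by simp
  then show False using M.dimv_top_rep_top rep_iso_dimv[OF iso M.i] by simp
qed

lemma soc_rep_iso_same_socle:
  assumes cM: "string_presentation n l M iM x (Suc a) qM a" and cN: "string_presentation n l N iN y (Suc b) qN b"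
    and iso: "rep_iso n (soc_rep n M) (soc_rep n N)"
  shows "(iM + a) mod n = (iN + b) mod n"
proof (rule ccontr)
  interpret M: string_presentation n l M iM x "Suc a" qM a by (rule cM)
  interpret N: string_presentation n l N iN y "Suc b" qN b by (rule cN)
  have v: "(iM + a) mod n < n" using M.n by simp
  assume "(iM + a) mod n \<noteq> (iN + b) mod n"
  then have "fst (soc_rep n N) ((iM + a) mod n) = 0" using N.dimv_soc_rep_other[OF v] by simp
  then show False using M.dimv_soc_rep_socle rep_iso_dimv[OF iso v] by simp
qed

section \<open>Stable homomorphisms between string modules\<close>

lemma (in string_presentation) length_less_of_not_projective: "\<not> is_projective n l M \<Longrightarrow> t < l"
  using length_le is_projective_of_full_length by fastforce

text \<open>The witness is the quotient map \<open>N \<rightarrow> M\<close>.\<close>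
lemma same_top_not_stably_zero:
  fixes M N :: "'k::field rep"
  assumes cM: "string_presentation n l M i x (Suc a) qM a" and cN: "string_presentation n l N i y (Suc b) qN b"
    and ab: "a \<le> b" and bl: "b < l"
  shows "\<not> stable_hom_zero n l N M"
proof
  interpret M: string_presentation n l M i x "Suc a" qM a by (rule cM)
  interpret N: string_presentation n l N i y "Suc b" qN b by (rule cN)
  let ?f = "string_map n M i x (Suc a) N qN (Suc b)"
  have f: "is_hom n N M ?f" "?f i *\<^sub>v y = x"
    using string_map[OF N.split_cyclic_vector_axioms M.cyclic_vector_axioms] ab by auto
  assume "stable_hom_zero n l N M"
  then have "factors_through_projective n l N M ?f" using f(1) unfolding stable_hom_zero_def by blast
  from M.factors_through_projective_obstruction[OF N.rep this M.i N.x N.x_killed, of 0]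
  show False using f(2) M.x M.i bl by simp
qed

text \<open>The witness is the inclusion \<open>M \<rightarrow> N\<close>.\<close>
lemma same_socle_not_stably_zero:
  fixes M N :: "'k::field rep"
  assumes cM: "string_presentation n l M iM x (Suc a) qM a" and cN: "string_presentation n l N iN y (Suc b) qN b"
    and ab: "a \<le> b" and bl: "b < l" and socle: "(iM + a) mod n = (iN + b) mod n"
  shows "\<not> stable_hom_zero n l M N"
proof
  interpret M: string_presentation n l M iM x "Suc a" qM a by (rule cM)
  interpret N: string_presentation n l N iN y "Suc b" qN b by (rule cN)
  have n: "1 \<le> n" by (rule M.n)
  define e where "e = b - a"
  define x' where "x' = pathmat n N iN e *\<^sub>v y"
  have ve: "(iN + e) mod n = iM"
  proof -
    have r: "(iN + e) mod n < n" using n by simp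
    have "(a + (iN + e) mod n) mod n = (a + (iN + e)) mod n" by (simp add: mod_add_right_eq)
    also have "a + (iN + e) = iN + b" unfolding e_def using ab by simp
    also have "(iN + b) mod n = (a + iM) mod n" using socle by (simp add: add.commute)
    finally show ?thesis using mod_add_left_cancel_less[OF r M.i] by simp
  qed
  have x': "x' \<in> carrier_vec (dimv N iM)"
    unfolding x'_def using pathmat_mult_vec_carrier[OF N.rep n N.i N.x, of e] ve by simp
  have "pathmat n N iM (Suc a) *\<^sub>v x' = pathmat n N iN (e + Suc a) *\<^sub>v y"
    unfolding x'_def by (rule pathmat_mult_vec_comp[OF N.rep n N.i N.x ve[symmetric]])
  also have "e + Suc a = Suc b" unfolding e_def using ab by simp
  also have "pathmat n N iN (Suc b) *\<^sub>v y = 0\<^sub>v (dimv N ((iN + Suc b) mod n))" by (rule N.x_killed)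
  also have "(iN + Suc b) mod n = (iM + Suc a) mod n" using socle by (metis add_Suc_right mod_Suc_eq)
  finally have "cyclic_vector n l N iM x' (Suc a)"
    by unfold_locales (use N.rep M.i x' in auto)
  then have f: "is_hom n M N (string_map n N iM x' (Suc a) M qM (Suc a))"
    "string_map n N iM x' (Suc a) M qM (Suc a) iM *\<^sub>v x = x'"
    using string_map[OF M.split_cyclic_vector_axioms] by auto
  assume "stable_hom_zero n l M N"
  then have "factors_through_projective n l M N (string_map n N iM x' (Suc a) M qM (Suc a))"
    using f(1) unfolding stable_hom_zero_def by blast
  from N.factors_through_projective_obstruction[OF M.rep this M.i M.x M.x_killed, of e]
  show False using f(2) ve bl ab unfolding x'_def e_def by (simp add: less_Suc_eq_le)
qed

lemma same_top_not_stably_orthogonal: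
  fixes M N :: "'k::field rep"
  assumes cM: "string_presentation n l M i x (Suc a) qM a" and cN: "string_presentation n l N i y (Suc b) qN b"
    and "a < l" "b < l"
  shows "\<not> (stable_hom_zero n l M N \<and> stable_hom_zero n l N M)"
  using same_top_not_stably_zero[OF cM cN] same_top_not_stably_zero[OF cN cM] assms(3,4)
  by (cases "a \<le> b") auto

lemma same_socle_not_stably_orthogonal:
  fixes M N :: "'k::field rep"
  assumes cM: "string_presentation n l M iM x (Suc a) qM a" and cN: "string_presentation n l N iN y (Suc b) qN b"
    and "a < l" "b < l" and "(iM + a) mod n = (iN + b) mod n"
  shows "\<not> (stable_hom_zero n l M N \<and> stable_hom_zero n l N M)"
  using same_socle_not_stably_zero[OF cM cN] same_socle_not_stably_zero[OF cN cM] assms(3-5)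
  by (cases "a \<le> b") auto

theorem lemma2p9:
  fixes n l :: nat and M N :: "'k::alg_closed_field rep"
  assumes "1 \<le> n"
    and "indecomposable n l M" and "indecomposable n l N"
    and "\<not> is_projective n l M" and "\<not> is_projective n l N"
    and "stable_hom_zero n l M N" and "stable_hom_zero n l N M"
  shows "\<not> rep_iso n (top_rep n M) (top_rep n N) \<and> \<not> rep_iso n (soc_rep n M) (soc_rep n N)"
proof -
  obtain iM x a qM where cM: "string_presentation n l M iM x (Suc a) qM a"
    using indecomposable_string_presentation[OF assms(2,1)] .
  obtain iN y b qN where cN: "string_presentation n l N iN y (Suc b) qN b"
    using indecomposable_string_presentation[OF assms(3,1)] .
  have al: "a < l" and bl: "b < l"
    using string_presentation.length_less_of_not_projective cM cN assms(4,5) by blast+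
  have "\<not> rep_iso n (top_rep n M) (top_rep n N)"
  proof
    assume "rep_iso n (top_rep n M) (top_rep n N)"
    then have "string_presentation n l N iM y (Suc b) qN b" using top_rep_iso_same_top[OF cM cN] cN by simp
    then show False using same_top_not_stably_orthogonal[OF cM _ al bl] assms(6,7) by blast
  qed
  moreover have "\<not> rep_iso n (soc_rep n M) (soc_rep n N)"
    using soc_rep_iso_same_socle[OF cM cN] same_socle_not_stably_orthogonal[OF cM cN al bl] assms(6,7) by blast
  ultimately show ?thesis ..
qed

end
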